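(* Let $a\ge0$. For all $U\in\mathcal H^2(\mathbb C_a)$, the mapping $t\mapsto\big(p\mapsto e^{-p\widetilde{\mathcal K}(p)t}U(p)\big)$ from $\mathbb R^+$ to $\mathcal H^2(\mathbb C_a)$ is well defined and continuous, and for all $t\in\mathbb R^+$, $\|e^{-p\widetilde{\mathcal K}(p)t}U\|_{\mathcal H^2(\mathbb C_a)}\le\|U\|_{\mathcal H^2(\mathbb C_a)}$. If moreover $a>0$, there exists $c_a>0$ such that for all $t\in\mathbb R^+$, \[ \|e^{-p\widetilde{\mathcal K}(p)t}U\|_{\mathcal H^2(\mathbb C_a)}\le e^{-c_at}\|U\|_{\mathcal H^2(\mathbb C_a)}. \]
   Context: $\kappa>0$; $\widetilde{\mathcal K}(p)=(1+\kappa^2p^2)^{-1/2}$, where the square root is the one with positive real part. $\mathbb C_a=\{p\in\mathbb C:\mathfrak{Re}\,p>a\}$ and $\mathcal H^2(\mathbb C_a)$ is the Hardy space of holomorphic $U$ on $\mathbb C_a$ with $\|U\|^2_{\mathcal H^2(\mathbb C_a)}=\sup_{\alpha>a}\int_{\mathbb R}|U(\alpha+i\xi)|^2d\xi<\infty$. *)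

theory Defs
  imports "HOL-Analysis.Analysis"
begin

definition half_plane :: "real \<Rightarrow> complex set" where
  "half_plane a = {p. a < Re p}"

definition Ktilde :: "real \<Rightarrow> complex \<Rightarrow> complex" where
  "Ktilde \<kappa> p = 1 / csqrt (1 + (complex_of_real \<kappa>)\<^sup>2 * p\<^sup>2)"

definition hardy_sq :: "real \<Rightarrow> (complex \<Rightarrow> complex) \<Rightarrow> ennreal" where
  "hardy_sq a U = (SUP \<alpha>\<in>{a<..}. \<integral>\<^sup>+ \<xi>. ennreal ((cmod (U (Complex \<alpha> \<xi>)))\<^sup>2) \<partial>lborel)"

definition H2 :: "real \<Rightarrow> (complex \<Rightarrow> complex) set" where
  "H2 a = {U. U holomorphic_on half_plane a \<and> hardy_sq a U < \<infinity>}"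

definition H2_norm :: "real \<Rightarrow> (complex \<Rightarrow> complex) \<Rightarrow> real" where
  "H2_norm a U = sqrt (enn2real (hardy_sq a U))"

definition semigrp :: "real \<Rightarrow> real \<Rightarrow> (complex \<Rightarrow> complex) \<Rightarrow> complex \<Rightarrow> complex" where
  "semigrp \<kappa> t U = (\<lambda>p. exp (- p * Ktilde \<kappa> p * complex_of_real t) * U p)"

end

(*
  Write w(p) = p K(p). On Re p > 0 the function w is holomorphic with Re w > 0, so exp(-w t)
  is a holomorphic multiplier of modulus at most 1: this gives membership in H^2(C_a) and
  contractivity. For a > 0 the point u = 1/p ranges over a compact disc on which
  Re w = Re (1 / sqrt (kappa^2 + u^2)) is positive, so Re w >= c > 0 and |exp(-w t)| <= exp(-c t).

  For continuity, |exp(-w t) - exp(-w s)|^2 <= min 4 (G(Im p) |t - s|^2) with G independent of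
  Re p, so it suffices that the integral of g_d(xi) |U(alpha + i xi)|^2 tends to 0 as d -> 0,
  uniformly in alpha > a. By Cauchy's theorem on strips, the integral of
  U(alpha + i xi) conj(U(beta + i xi)) depends only on alpha + beta. Hence, by Cauchy-Schwarz,
  N(alpha) = ||U(alpha + i .)||^2 is log-convex; being bounded, it is nonincreasing, and
  ||U(alpha + i .) - U(beta + i .)||^2 <= N(alpha) - N(beta) for alpha <= beta. So the vertical
  lines of U form a totally bounded family in L^2, and dominated convergence on a finite net
  gives the uniform estimate.
*)

theory Submission
  imports Defs "HOL-Complex_Analysis.Complex_Analysis"
begin

section \<open>Vertical line integrals of holomorphic functions on strips\<close>

lemma contour_integral_linepath_same_Im:
  assumes "a < b"
  shows "contour_integral (linepath (Complex a y) (Complex b y)) f = integral {a..b} (\<lambda>x. f (Complex x y))"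
proof -
  have lp: "linepath (Complex a y) (Complex b y) x = Complex (linepath a b x) y" for x
    by (simp add: linepath_def complex_eq_iff algebra_simps)
  have "contour_integral (linepath (Complex a y) (Complex b y)) f
      = (Complex b y - Complex a y) * integral {0..1} (\<lambda>x. f (linepath (Complex a y) (Complex b y) x))"
    by (simp add: contour_integral_integral)
  also have "Complex b y - Complex a y = of_real (b - a)"
    by (simp add: complex_eq_iff)
  also have "integral {0..1} (\<lambda>x. f (linepath (Complex a y) (Complex b y) x))
      = integral {0..(b - a) / (b - a)} (\<lambda>x. f (Complex (a + (b - a) * x) y))"
    using assms unfolding lp by (simp add: linepath_def algebra_simps)
  also have "{0..(b - a) / (b - a)} = (\<lambda>x. x / (b - a)) ` {0..b - a}"
    using assms by simp
  also have "integral \<dots> (\<lambda>x. f (Complex (a + (b - a) * x) y))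
      = integral {a - a..b - a} (\<lambda>x. f (Complex (x + a) y)) / of_real (b - a)"
    using assms by (subst integral_stretch_real) (auto simp: scaleR_conv_of_real add_ac)
  also have "\<dots> = integral {a..b} (\<lambda>x. f (Complex x y)) / of_real (b - a)"
    by (subst integral_shift_real_ivl) (rule refl)
  finally show ?thesis
    using assms by simp
qed

lemma Cauchy_rectangle_integrals:
  fixes f :: "complex \<Rightarrow> complex"
  assumes holo: "f holomorphic_on cbox (Complex x0 y0) (Complex x1 y1)" and "x0 < x1" "y0 < y1"
  shows "\<i> * (integral {y0..y1} (\<lambda>y. f (Complex x1 y)) - integral {y0..y1} (\<lambda>y. f (Complex x0 y)))
       = integral {x0..x1} (\<lambda>x. f (Complex x y1)) - integral {x0..x1} (\<lambda>x. f (Complex x y0))"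
proof -
  define R where "R = cbox (Complex x0 y0) (Complex x1 y1)"
  define a1 a2 a3 a4 where "a1 = Complex x0 y0" and "a2 = Complex x1 y0"
    and "a3 = Complex x1 y1" and "a4 = Complex x0 y1"
  note corners = a1_def a2_def a3_def a4_def
  have in_R: "a1 \<in> R" "a2 \<in> R" "a3 \<in> R" "a4 \<in> R"
    using assms(2,3) by (auto simp: R_def corners in_cbox_complex_iff)
  have "convex R" by (simp add: R_def convex_box)
  have cont: "continuous_on R f"
    using holo by (simp add: R_def holomorphic_on_imp_continuous_on)
  have cont_segment: "continuous_on (closed_segment u v) f" if "u \<in> R" "v \<in> R" for u v
    using cont closed_segment_subset[OF that \<open>convex R\<close>] by (rule continuous_on_subset)
  have side: "(f has_contour_integral contour_integral (linepath u v) f) (linepath u v)"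
    if "u \<in> R" "v \<in> R" for u v
    using cont_segment[OF that]
    by (intro has_contour_integral_integral contour_integrable_continuous_linepath)
  have rect: "rectpath a1 a3 = linepath a1 a2 +++ linepath a2 a3 +++ linepath a3 a4 +++ linepath a4 a1"
    by (simp add: rectpath_def Let_def corners)
  have "(f has_contour_integral
      (contour_integral (linepath a1 a2) f + (contour_integral (linepath a2 a3) f
        + (contour_integral (linepath a3 a4) f + contour_integral (linepath a4 a1) f))))
      (rectpath a1 a3)"
    unfolding rect using in_R by (intro has_contour_integral_join side valid_path_join) auto
  moreover have "(f has_contour_integral 0) (rectpath a1 a3)"
  proof (rule Cauchy_theorem_convex_simple[OF holo[folded R_def] \<open>convex R\<close>])
    show "path_image (rectpath a1 a3) \<subseteq> R"
      using path_image_rectpath_subset_cbox[of a1 a3] assms(2,3) by (simp add: R_def corners)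
  qed auto
  ultimately have sum0: "contour_integral (linepath a1 a2) f + (contour_integral (linepath a2 a3) f
        + (contour_integral (linepath a3 a4) f + contour_integral (linepath a4 a1) f)) = 0"
    by (rule has_contour_integral_unique)
  have rev: "contour_integral (linepath a3 a4) f = - contour_integral (linepath a4 a3) f"
    "contour_integral (linepath a4 a1) f = - contour_integral (linepath a1 a4) f"
    using in_R cont_segment contour_integral_reverse_linepath by blast+
  have horizontal: "contour_integral (linepath a1 a2) f = integral {x0..x1} (\<lambda>x. f (Complex x y0))"
    "contour_integral (linepath a4 a3) f = integral {x0..x1} (\<lambda>x. f (Complex x y1))"
    unfolding corners using assms(2) by (rule contour_integral_linepath_same_Im)+
  have vertical: "contour_integral (linepath a2 a3) f = \<i> * integral {y0..y1} (\<lambda>y. f (Complex x1 y))"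
    "contour_integral (linepath a1 a4) f = \<i> * integral {y0..y1} (\<lambda>y. f (Complex x0 y))"
    unfolding corners using assms(3) by (auto intro: contour_integral_linepath_same_Re)
  show ?thesis
    using sum0 unfolding rev horizontal vertical by (simp add: algebra_simps)
qed

lemma nn_integral_finite_imp_small_somewhere:
  fixes \<psi> :: "real \<Rightarrow> ennreal"
  assumes "(\<integral>\<^sup>+ y. \<psi> y \<partial>lborel) < \<infinity>" "0 < e"
  shows "\<exists>y\<ge>N. \<psi> y < ennreal e" and "\<exists>y\<le>N. \<psi> y < ennreal e"
proof -
  have small_on: "\<exists>y\<in>S. \<psi> y < ennreal e"
    if S: "S \<in> sets lborel" "\<And>n::nat. {c n..c n + real n} \<subseteq> S" for S c
  proof (rule ccontr)
    assume "\<not> ?thesis"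
    then have "ennreal e * emeasure lborel S \<le> (\<integral>\<^sup>+ y. \<psi> y \<partial>lborel)"
      unfolding nn_integral_cmult_indicator[OF S(1), symmetric]
      by (intro nn_integral_mono) (auto simp: not_less split: split_indicator)
    moreover have "emeasure lborel S = \<infinity>"
    proof (rule ccontr)
      assume "emeasure lborel S \<noteq> \<infinity>"
      then obtain n where "emeasure lborel S < of_nat n"
        using ennreal_Ex_less_of_nat by (auto simp: top.not_eq_extremum)
      moreover have "of_nat n \<le> emeasure lborel S"
        using emeasure_mono[OF S(2)[of n] S(1)] by (simp add: ennreal_of_nat_eq_real_of_nat)
      ultimately show False by simp
    qed
    ultimately show False
      using assms by (simp add: ennreal_mult_eq_top_iff)
  qed
  show "\<exists>y\<ge>N. \<psi> y < ennreal e"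
    using small_on[of "{N..}" "\<lambda>_. N"] by auto
  show "\<exists>y\<le>N. \<psi> y < ennreal e"
    using small_on[of "{..N}" "\<lambda>n. N - real n"] by auto
qed

lemma integral_expanding_intervals_tendsto:
  fixes f :: "real \<Rightarrow> complex"
  assumes f: "integrable lborel f"
    and L: "filterlim L at_bot sequentially" and R: "filterlim R at_top sequentially"
  shows "(\<lambda>n. integral {L n..R n} f) \<longlonglongrightarrow> (LINT x|lborel. f x)"
proof -
  have "integral {L n..R n} f = (LINT x|lborel. indicator {L n..R n} x *\<^sub>R f x)" for n
  proof -
    have "set_integrable lborel {L n..R n} f"
      unfolding set_integrable_def using f by (intro integrable_mult_indicator) auto
    then show ?thesis
      by (simp add: set_borel_integral_eq_integral(2)[symmetric] set_lebesgue_integral_def)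
  qed
  moreover have "(\<lambda>n. LINT x|lborel. indicator {L n..R n} x *\<^sub>R f x) \<longlonglongrightarrow> (LINT x|lborel. f x)"
  proof (rule integral_dominated_convergence[where w = "\<lambda>x. norm (f x)"])
    show "AE x in lborel. (\<lambda>n. indicator {L n..R n} x *\<^sub>R f x) \<longlonglongrightarrow> f x"
    proof (rule AE_I2)
      fix x
      have "\<forall>\<^sub>F n in sequentially. L n \<le> x" "\<forall>\<^sub>F n in sequentially. x \<le> R n"
        using L R by (simp_all add: filterlim_at_bot filterlim_at_top)
      then have "\<forall>\<^sub>F n in sequentially. indicator {L n..R n} x *\<^sub>R f x = f x"
        by eventually_elim simp
      then show "(\<lambda>n. indicator {L n..R n} x *\<^sub>R f x) \<longlonglongrightarrow> f x"
        by (rule tendsto_eventually)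
    qed
  qed (use f in \<open>auto split: split_indicator\<close>)
  ultimately show ?thesis by simp
qed

lemma nn_integral_finite_small_along_sequences:
  fixes H :: "real \<Rightarrow> real"
  assumes fin: "(\<integral>\<^sup>+ y. ennreal (H y) \<partial>lborel) < \<infinity>" and H_nonneg: "\<And>y. 0 \<le> H y"
  obtains R L where "filterlim R at_top sequentially" "filterlim L at_bot sequentially"
    "(\<lambda>n. H (R n)) \<longlonglongrightarrow> 0" "(\<lambda>n. H (L n)) \<longlonglongrightarrow> 0"
proof -
  note small = nn_integral_finite_imp_small_somewhere[OF fin]
  have "\<exists>y. real (Suc n) \<le> y \<and> H y < inverse (real (Suc n))"
    and "\<exists>y. y \<le> - real (Suc n) \<and> H y < inverse (real (Suc n))" for n
    using small(1)[of "inverse (real (Suc n))" "real (Suc n)"]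
      small(2)[of "inverse (real (Suc n))" "- real (Suc n)"]
    by (auto simp: ennreal_less_iff[OF H_nonneg] simp del: of_nat_Suc)
  then obtain R L where R: "\<And>n. real (Suc n) \<le> R n \<and> H (R n) < inverse (real (Suc n))"
    and L: "\<And>n. L n \<le> - real (Suc n) \<and> H (L n) < inverse (real (Suc n))"
    using choice[of "\<lambda>n y. real (Suc n) \<le> y \<and> H y < inverse (real (Suc n))"]
      choice[of "\<lambda>n y. y \<le> - real (Suc n) \<and> H y < inverse (real (Suc n))"] by blast
  have Suc_at_top: "filterlim (\<lambda>n. real (Suc n)) at_top sequentially"
    by (rule filterlim_compose[OF filterlim_real_sequentially filterlim_Suc])
  have "filterlim R at_top sequentially"
    by (rule filterlim_at_top_mono[OF Suc_at_top always_eventually]) (use R in blast)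
  moreover have "filterlim (\<lambda>n. - L n) at_top sequentially"
    by (rule filterlim_at_top_mono[OF Suc_at_top always_eventually])
      (use L in \<open>force simp: le_minus_iff\<close>)
  then have "filterlim L at_bot sequentially"
    by (simp add: filterlim_uminus_at_bot)
  moreover have "(\<lambda>n. H (S n)) \<longlonglongrightarrow> 0" if "\<And>n. H (S n) < inverse (real (Suc n))" for S
  proof (rule tendsto_sandwich[OF always_eventually always_eventually tendsto_const LIMSEQ_inverse_real_of_nat])
    show "\<forall>n. 0 \<le> H (S n)" "\<forall>n. H (S n) \<le> inverse (real (Suc n))"
      using H_nonneg that by (auto intro: less_imp_le)
  qed
  then have "(\<lambda>n. H (R n)) \<longlonglongrightarrow> 0" "(\<lambda>n. H (L n)) \<longlonglongrightarrow> 0"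
    using R L by blast+
  ultimately show ?thesis using that by blast
qed

lemma holomorphic_rectangle_vertical_diff_le:
  fixes f :: "complex \<Rightarrow> complex"
  assumes holo: "f holomorphic_on cbox (Complex x0 y0) (Complex x1 y1)" and "x0 < x1" "y0 < y1"
  shows "cmod (integral {y0..y1} (\<lambda>y. f (Complex x1 y)) - integral {y0..y1} (\<lambda>y. f (Complex x0 y)))
       \<le> integral {x0..x1} (\<lambda>x. cmod (f (Complex x y1))) + integral {x0..x1} (\<lambda>x. cmod (f (Complex x y0)))"
proof -
  have cont: "continuous_on {x0..x1} (\<lambda>x. f (Complex x y))" if "y \<in> {y0..y1}" for y
    by (rule continuous_on_compose2[OF holomorphic_on_imp_continuous_on[OF holo]])
      (use that in \<open>auto simp: Complex_eq in_cbox_complex_iff intro!: continuous_intros\<close>)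
  have horizontal: "cmod (integral {x0..x1} (\<lambda>x. f (Complex x y))) \<le> integral {x0..x1} (\<lambda>x. cmod (f (Complex x y)))"
    if "y \<in> {y0..y1}" for y
    using cont[OF that] by (intro integral_norm_bound_integral integrable_continuous_interval continuous_intros) auto
  have "cmod (integral {y0..y1} (\<lambda>y. f (Complex x1 y)) - integral {y0..y1} (\<lambda>y. f (Complex x0 y)))
      = cmod (integral {x0..x1} (\<lambda>x. f (Complex x y1)) - integral {x0..x1} (\<lambda>x. f (Complex x y0)))"
    using Cauchy_rectangle_integrals[OF assms] by (metis norm_ii mult_1 norm_mult)
  also have "\<dots> \<le> integral {x0..x1} (\<lambda>x. cmod (f (Complex x y1))) + integral {x0..x1} (\<lambda>x. cmod (f (Complex x y0)))"
    using assms(3) by (intro order_trans[OF norm_triangle_ineq4] add_mono horizontal) auto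
  finally show ?thesis .
qed

lemma strip_nn_integral_swap:
  fixes f :: "complex \<Rightarrow> complex"
  assumes "continuous_on {s. x0 \<le> Re s \<and> Re s \<le> x1} f"
  shows "(\<integral>\<^sup>+ y. (\<integral>\<^sup>+ x. ennreal (cmod (f (Complex x y))) * indicator {x0..x1} x \<partial>lborel) \<partial>lborel)
       = (\<integral>\<^sup>+ x. (\<integral>\<^sup>+ y. ennreal (cmod (f (Complex x y))) \<partial>lborel) * indicator {x0..x1} x \<partial>lborel)"
proof -
  define F where "F z = ennreal (norm (indicator ({x0..x1} \<times> UNIV) z *\<^sub>R f (Complex (fst z) (snd z))))"
    for z :: "real \<times> real"
  have F: "F (x, y) = ennreal (cmod (f (Complex x y))) * indicator {x0..x1} x" for x y
    by (simp add: F_def indicator_def)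
  have "continuous_on ({x0..x1} \<times> UNIV) (\<lambda>z. f (Complex (fst z) (snd z)))"
    by (rule continuous_on_compose2[OF assms]) (auto simp: Complex_eq intro!: continuous_intros)
  then have "(\<lambda>z. indicator ({x0..x1} \<times> UNIV) z *\<^sub>R f (Complex (fst z) (snd z))) \<in> borel_measurable borel"
    by (intro borel_measurable_continuous_on_indicator borel_closed closed_Times) auto
  then have "F \<in> borel_measurable borel"
    unfolding F_def by measurable
  then have "case_prod (\<lambda>x y. F (x, y)) \<in> borel_measurable (lborel \<Otimes>\<^sub>M lborel)"
    by (simp add: lborel_prod)
  then have "(\<integral>\<^sup>+ y. (\<integral>\<^sup>+ x. F (x, y) \<partial>lborel) \<partial>lborel) = (\<integral>\<^sup>+ x. (\<integral>\<^sup>+ y. F (x, y) \<partial>lborel) \<partial>lborel)"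
    by (rule lborel_pair.Fubini')
  also have "\<dots> = (\<integral>\<^sup>+ x. (\<integral>\<^sup>+ y. ennreal (cmod (f (Complex x y))) \<partial>lborel) * indicator {x0..x1} x \<partial>lborel)"
    unfolding F by (intro nn_integral_cong) (simp split: split_indicator)
  finally show ?thesis
    unfolding F .
qed

lemma holomorphic_strip_vertical_integrals_eq:
  fixes f :: "complex \<Rightarrow> complex"
  assumes holo: "f holomorphic_on {s. x0 \<le> Re s \<and> Re s \<le> x1}" and "x0 < x1"
    and int0: "integrable lborel (\<lambda>y. f (Complex x0 y))"
    and int1: "integrable lborel (\<lambda>y. f (Complex x1 y))"
    and strip: "(\<integral>\<^sup>+ x. (\<integral>\<^sup>+ y. ennreal (cmod (f (Complex x y))) \<partial>lborel) * indicator {x0..x1} x \<partial>lborel) < \<infinity>"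
  shows "(LINT y|lborel. f (Complex x0 y)) = (LINT y|lborel. f (Complex x1 y))"
proof -
  define S where "S = {s. x0 \<le> Re s \<and> Re s \<le> x1}"
  define H where "H y = integral {x0..x1} (\<lambda>x. cmod (f (Complex x y)))" for y
  have cont: "continuous_on {x0..x1} (\<lambda>x. f (Complex x y))" for y
    by (rule continuous_on_compose2[OF holomorphic_on_imp_continuous_on[OF holo]])
      (auto simp: Complex_eq intro!: continuous_intros)
  have "(\<integral>\<^sup>+ x. ennreal (cmod (f (Complex x y))) * indicator {x0..x1} x \<partial>lborel) = ennreal (H y)" for y
    unfolding H_def using cont[of y]
    by (intro nn_integral_has_integral_lebesgue' integrable_integral integrable_continuous_interval
        continuous_intros) auto
  then have "(\<integral>\<^sup>+ y. ennreal (H y) \<partial>lborel) < \<infinity>"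
    using strip strip_nn_integral_swap[OF holomorphic_on_imp_continuous_on[OF holo]] by simp
  moreover have "0 \<le> H y" for y
    unfolding H_def using cont[of y]
    by (intro integral_nonneg integrable_continuous_interval continuous_intros) auto
  ultimately obtain R L where R: "filterlim R at_top sequentially" "(\<lambda>n. H (R n)) \<longlonglongrightarrow> 0"
    and L: "filterlim L at_bot sequentially" "(\<lambda>n. H (L n)) \<longlonglongrightarrow> 0"
    by (rule nn_integral_finite_small_along_sequences)
  \<comment> \<open>Cauchy's theorem on rectangles whose horizontal sides lie where \<open>H\<close> is small\<close>
  define J where "J x n = integral {L n..R n} (\<lambda>y. f (Complex x y))" for x n
  have "\<forall>\<^sub>F n in sequentially. L n < R n"
    using eventually_conj[OF filterlim_at_bot_dense[THEN iffD1, OF L(1), rule_format, of 0]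
        filterlim_at_top_dense[THEN iffD1, OF R(1), rule_format, of 0]] by eventually_elim simp
  then have "\<forall>\<^sub>F n in sequentially. norm (J x1 n - J x0 n) \<le> H (R n) + H (L n)"
  proof eventually_elim
    case (elim n)
    have "cbox (Complex x0 (L n)) (Complex x1 (R n)) \<subseteq> S"
      by (auto simp: S_def in_cbox_complex_iff)
    with elim show ?case
      unfolding J_def H_def using \<open>x0 < x1\<close>
      by (intro holomorphic_rectangle_vertical_diff_le holomorphic_on_subset[OF holo[folded S_def]])
  qed
  moreover have "(\<lambda>n. H (R n) + H (L n)) \<longlonglongrightarrow> 0"
    using tendsto_add_zero[OF R(2) L(2)] .
  ultimately have "(\<lambda>n. J x1 n - J x0 n) \<longlonglongrightarrow> 0"
    by (rule Lim_null_comparison)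
  moreover have "(\<lambda>n. J x1 n - J x0 n) \<longlonglongrightarrow> (LINT y|lborel. f (Complex x1 y)) - (LINT y|lborel. f (Complex x0 y))"
    unfolding J_def
    by (intro tendsto_diff integral_expanding_intervals_tendsto int0 int1 R(1) L(1))
  ultimately show ?thesis
    using LIMSEQ_unique by fastforce
qed

section \<open>The symbol p K(p)\<close>

definition pKtilde :: "real \<Rightarrow> complex \<Rightarrow> complex" where
  "pKtilde \<kappa> p = p * Ktilde \<kappa> p"

lemma semigrp_eq: "semigrp \<kappa> t U = (\<lambda>p. exp (- pKtilde \<kappa> p * of_real t) * U p)"
  by (simp add: semigrp_def pKtilde_def)

lemma add_sq_notin_nonpos_Reals:
  assumes "0 < c" "Re u \<noteq> 0"
  shows "complex_of_real c + u\<^sup>2 \<notin> \<real>\<^sub>\<le>\<^sub>0"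
proof
  assume "complex_of_real c + u\<^sup>2 \<in> \<real>\<^sub>\<le>\<^sub>0"
  then have "Im (complex_of_real c + u\<^sup>2) = 0" "Re (complex_of_real c + u\<^sup>2) \<le> 0"
    by (auto simp: complex_nonpos_Reals_iff)
  then have "Re u * Im u = 0" and re: "c + (Re u)\<^sup>2 - (Im u)\<^sup>2 \<le> 0"
    by (auto simp: power2_eq_square)
  then have "Im u = 0" using assms(2) by simp
  with re have "c + (Re u)\<^sup>2 \<le> 0" by simp
  with assms(1) show False using zero_le_power2[of "Re u"] by linarith
qed

lemma one_plus_sq_notin_nonpos_Reals:
  assumes "\<kappa> \<noteq> 0" "Re p \<noteq> 0"
  shows "1 + (complex_of_real \<kappa>)\<^sup>2 * p\<^sup>2 \<notin> \<real>\<^sub>\<le>\<^sub>0"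
  using add_sq_notin_nonpos_Reals[of 1 "of_real \<kappa> * p"] assms by (simp add: power_mult_distrib)

lemma Re_csqrt_pos:
  assumes "z \<notin> \<real>\<^sub>\<le>\<^sub>0"
  shows "0 < Re (csqrt z)"
proof (rule ccontr)
  define s where "s = csqrt z"
  assume "\<not> 0 < Re (csqrt z)"
  then have "Re s = 0" using Re_csqrt[of z] by (simp add: s_def)
  moreover have "z = s\<^sup>2" by (simp add: s_def)
  ultimately have "z \<in> \<real>\<^sub>\<le>\<^sub>0" by (simp add: complex_nonpos_Reals_iff power2_eq_square)
  with assms show False by simp
qed

lemma Re_inverse_pos: "0 < Re s \<Longrightarrow> 0 < Re (1 / s)"
  by (auto simp: Re_divide add_pos_nonneg intro!: divide_pos_pos)

lemma pKtilde_holomorphic: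
  assumes "\<kappa> \<noteq> 0"
  shows "pKtilde \<kappa> holomorphic_on {p. 0 < Re p}"
  unfolding pKtilde_def[abs_def] Ktilde_def
proof (intro holomorphic_intros)
  fix p :: complex assume "p \<in> {p. 0 < Re p}"
  then have *: "1 + (complex_of_real \<kappa>)\<^sup>2 * p\<^sup>2 \<notin> \<real>\<^sub>\<le>\<^sub>0"
    using one_plus_sq_notin_nonpos_Reals[OF assms] by simp
  then show "1 + (complex_of_real \<kappa>)\<^sup>2 * p\<^sup>2 \<notin> \<real>\<^sub>\<le>\<^sub>0" .
  from * show "csqrt (1 + (complex_of_real \<kappa>)\<^sup>2 * p\<^sup>2) \<noteq> 0" by auto
qed

lemma Re_pKtilde_pos:
  assumes "\<kappa> \<noteq> 0" "0 < Re p"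
  shows "0 < Re (pKtilde \<kappa> p)"
proof -
  define s where "s = csqrt (1 + (complex_of_real \<kappa>)\<^sup>2 * p\<^sup>2)"
  have Re_s: "0 < Re s"
    unfolding s_def using assms by (intro Re_csqrt_pos one_plus_sq_notin_nonpos_Reals) simp_all
  have "Im (s\<^sup>2) = Im (1 + (complex_of_real \<kappa>)\<^sup>2 * p\<^sup>2)" by (simp add: s_def)
  then have "Re s * Im s = \<kappa>\<^sup>2 * Re p * Im p" by (simp add: power2_eq_square algebra_simps)
  then have "Im p * Im s = Re p * (\<kappa> * Im p)\<^sup>2 / Re s"
    using Re_s by (simp add: field_simps power2_eq_square)
  then have "0 \<le> Im p * Im s" using assms Re_s by simp
  moreover have "pKtilde \<kappa> p = p / s" by (simp add: pKtilde_def Ktilde_def s_def)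
  ultimately show ?thesis
    using Re_s assms by (simp add: Re_divide add_pos_nonneg)
qed

lemma pKtilde_eq_inverse_csqrt:
  assumes "\<kappa> \<noteq> 0" "0 < Re p"
  shows "pKtilde \<kappa> p = 1 / csqrt ((complex_of_real \<kappa>)\<^sup>2 + (1 / p)\<^sup>2)"
proof -
  define v where "v = (complex_of_real \<kappa>)\<^sup>2 + (1 / p)\<^sup>2"
  have "p \<noteq> 0" using assms by auto
  have "0 < (Re p)\<^sup>2 + (Im p)\<^sup>2" using assms by (simp add: add_pos_nonneg)
  then have "0 < Re (1 / p)" using assms by (simp add: Re_divide cmod_power2)
  then have v: "v \<notin> \<real>\<^sub>\<le>\<^sub>0"
    unfolding v_def using add_sq_notin_nonpos_Reals[of "\<kappa>\<^sup>2" "1 / p"] assms by simp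
  \<comment> \<open>both sides square to \<open>1 / v\<close> and have positive real part\<close>
  have "1 + (complex_of_real \<kappa>)\<^sup>2 * p\<^sup>2 \<noteq> 0"
    using one_plus_sq_notin_nonpos_Reals[of \<kappa> p] assms by auto
  then have "(pKtilde \<kappa> p)\<^sup>2 = (1 / csqrt v)\<^sup>2"
    using \<open>p \<noteq> 0\<close> by (simp add: pKtilde_def Ktilde_def v_def power_divide field_simps)
  moreover have "0 < Re (1 / csqrt v)"
    using Re_csqrt_pos[OF v] by (rule Re_inverse_pos)
  ultimately show ?thesis
    using Re_pKtilde_pos[OF assms] by (auto simp: power2_eq_iff v_def)
qed

lemma compact_Re_ge_norm_sq:
  assumes "0 < a"
  shows "compact {u :: complex. a * (cmod u)\<^sup>2 \<le> Re u}"
proof -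
  have "closed {u :: complex. a * (cmod u)\<^sup>2 \<le> Re u}"
    by (intro closed_Collect_le continuous_intros)
  moreover have "{u :: complex. a * (cmod u)\<^sup>2 \<le> Re u} \<subseteq> cball 0 (1 / a)"
  proof
    fix u :: complex assume "u \<in> {u. a * (cmod u)\<^sup>2 \<le> Re u}"
    then have "a * (cmod u)\<^sup>2 \<le> cmod u" using complex_Re_le_cmod[of u] by simp
    then show "u \<in> cball 0 (1 / a)"
      using assms by (cases "u = 0") (auto simp: field_simps power2_eq_square)
  qed
  ultimately show ?thesis
    by (meson bounded_cball bounded_subset compact_eq_bounded_closed)
qed

lemma Re_pKtilde_uniform_lower:
  assumes "\<kappa> \<noteq> 0" "0 < a"
  shows "\<exists>c>0. \<forall>p. a < Re p \<longrightarrow> c \<le> Re (pKtilde \<kappa> p)"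
proof -
  define v where "v u = (complex_of_real \<kappa>)\<^sup>2 + u\<^sup>2" for u
  define h where "h u = Re (1 / csqrt (v u))" for u
  \<comment> \<open>as \<open>p\<close> ranges over \<open>Re p > a\<close>, \<open>1 / p\<close> ranges over the compact disc \<open>D\<close>\<close>
  define D where "D = {u. a * (cmod u)\<^sup>2 \<le> Re u}"
  have v_D: "v u \<notin> \<real>\<^sub>\<le>\<^sub>0" if "u \<in> D" for u
  proof (cases "u = 0")
    case True
    then show ?thesis using assms by (simp add: v_def complex_nonpos_Reals_iff)
  next
    case False
    then have "0 < a * (cmod u)\<^sup>2" using assms by simp
    then have "0 < Re u" using that by (simp add: D_def)
    then show ?thesis using add_sq_notin_nonpos_Reals[of "\<kappa>\<^sup>2" u] assms by (simp add: v_def)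
  qed
  have "v u \<noteq> 0" if "u \<in> D" for u
    using v_D[OF that] by auto
  then have "(\<lambda>u. 1 / csqrt (v u)) holomorphic_on D"
    using v_D unfolding v_def by (intro holomorphic_intros) auto
  moreover have "compact D" "0 \<in> D"
    using compact_Re_ge_norm_sq[OF assms(2)] by (simp_all add: D_def)
  ultimately have "continuous_on D h" "compact D" "D \<noteq> {}"
    unfolding h_def by (auto intro: continuous_on_Re holomorphic_on_imp_continuous_on)
  then obtain u0 where "u0 \<in> D" and u0_min: "\<And>u. u \<in> D \<Longrightarrow> h u0 \<le> h u"
    using continuous_attains_inf[of D h] by blast
  have "0 < h u0"
    unfolding h_def using Re_csqrt_pos[OF v_D[OF \<open>u0 \<in> D\<close>]] by (rule Re_inverse_pos)
  moreover have "h u0 \<le> Re (pKtilde \<kappa> p)" if "a < Re p" for p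
  proof -
    have "0 < Re p" using assms that by simp
    then have "p \<noteq> 0" by auto
    have "a * (cmod (1 / p))\<^sup>2 \<le> Re (1 / p)"
      using that \<open>p \<noteq> 0\<close> by (simp add: Re_divide norm_divide power_divide cmod_power2 divide_right_mono)
    then have "h u0 \<le> h (1 / p)" by (intro u0_min) (simp add: D_def)
    also have "\<dots> = Re (pKtilde \<kappa> p)"
      by (simp add: h_def v_def pKtilde_eq_inverse_csqrt assms(1) \<open>0 < Re p\<close> del: csqrt.simps)
    finally show ?thesis .
  qed
  ultimately show ?thesis by blast
qed

lemma norm_div_norm_sub_le:
  fixes z :: complex
  assumes "Im z \<noteq> b"
  shows "cmod z / cmod (z - \<i> * of_real b) \<le> 1 + \<bar>b\<bar> / \<bar>Im z - b\<bar>"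
proof -
  have pos: "0 < \<bar>Im z - b\<bar>" using assms by simp
  have le: "\<bar>Im z - b\<bar> \<le> cmod (z - \<i> * of_real b)"
    using abs_Im_le_cmod[of "z - \<i> * of_real b"] by simp
  then have pos': "0 < cmod (z - \<i> * of_real b)" using pos by linarith
  have "cmod z \<le> cmod (z - \<i> * of_real b) + \<bar>b\<bar>"
    using norm_triangle_ineq[of "z - \<i> * of_real b" "\<i> * of_real b"] by (simp add: norm_mult)
  then have "cmod z / cmod (z - \<i> * of_real b) \<le> (cmod (z - \<i> * of_real b) + \<bar>b\<bar>) / cmod (z - \<i> * of_real b)"
    using pos' by (simp add: divide_right_mono)
  also have "\<dots> = 1 + \<bar>b\<bar> / cmod (z - \<i> * of_real b)"
    using pos' by (simp add: add_divide_distrib)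
  also have "\<dots> \<le> 1 + \<bar>b\<bar> / \<bar>Im z - b\<bar>"
    using le pos by (simp add: frac_le)
  finally show ?thesis .
qed

(* At kappa xi = 1 and kappa xi = -1 the division by zero yields junk; these are null sets of xi. *)
definition pKtilde_bound :: "real \<Rightarrow> real \<Rightarrow> real" where
  "pKtilde_bound \<kappa> \<xi> = (1 + 1 / \<bar>\<kappa> * \<xi> - 1\<bar>) * (1 + 1 / \<bar>\<kappa> * \<xi> + 1\<bar>) / \<kappa>\<^sup>2"

lemma pKtilde_bound_nonneg: "0 \<le> pKtilde_bound \<kappa> \<xi>"
  by (simp add: pKtilde_bound_def)

lemma norm_pKtilde_sq_le:
  assumes "\<kappa> \<noteq> 0" "\<kappa> * Im p \<noteq> 1" "\<kappa> * Im p \<noteq> -1"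
  shows "(cmod (pKtilde \<kappa> p))\<^sup>2 \<le> pKtilde_bound \<kappa> (Im p)"
proof -
  define q where "q = of_real \<kappa> * p"
  have Im_q: "Im q = \<kappa> * Im p" by (simp add: q_def)
  have fac: "1 + (complex_of_real \<kappa>)\<^sup>2 * p\<^sup>2 = (q - \<i>) * (q + \<i>)"
    by (simp add: q_def algebra_simps power2_eq_square)
  have "0 < cmod (q - \<i>)" "0 < cmod (q + \<i>)"
    using assms Im_q by (auto simp: complex_eq_iff)
  have "(cmod (pKtilde \<kappa> p))\<^sup>2 = (cmod p)\<^sup>2 / cmod (1 + (complex_of_real \<kappa>)\<^sup>2 * p\<^sup>2)"
    by (simp add: pKtilde_def Ktilde_def norm_mult norm_divide power_divide power_mult_distrib)
  also have "\<dots> = (cmod p)\<^sup>2 / (cmod (q - \<i>) * cmod (q + \<i>))"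
    unfolding fac norm_mult ..
  also have "\<dots> = (cmod q)\<^sup>2 / (cmod (q - \<i>) * cmod (q + \<i>)) / \<kappa>\<^sup>2"
    using assms(1) by (simp add: q_def norm_mult power_mult_distrib)
  also have "\<dots> = (cmod q / cmod (q - \<i>)) * (cmod q / cmod (q + \<i>)) / \<kappa>\<^sup>2"
    by (simp add: power2_eq_square)
  also have "\<dots> \<le> (1 + 1 / \<bar>Im q - 1\<bar>) * (1 + 1 / \<bar>Im q + 1\<bar>) / \<kappa>\<^sup>2"
    using norm_div_norm_sub_le[of q 1] norm_div_norm_sub_le[of q "-1"] assms Im_q
    by (intro divide_right_mono mult_mono) auto
  also have "\<dots> = pKtilde_bound \<kappa> (Im p)" by (simp add: pKtilde_bound_def Im_q)
  finally show ?thesis .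
qed

lemma norm_exp_diff_le:
  fixes w :: complex
  assumes "0 \<le> Re w" "0 \<le> s" "0 \<le> t"
  shows "cmod (exp (- w * of_real t) - exp (- w * of_real s)) \<le> min 2 (cmod w * \<bar>t - s\<bar>)"
proof -
  have exp_le_1: "cmod (exp (- w * of_real r)) \<le> 1" if "0 \<le> r" for r
    using assms(1) that by simp
  let ?S = "closed_segment (complex_of_real s) (complex_of_real t)"
  have "cmod (exp (- w * of_real t) - exp (- w * of_real s)) \<le> cmod w * cmod (of_real t - of_real s)"
  proof (rule field_differentiable_bound[where f' = "\<lambda>z. - w * exp (- w * z)"])
    show "((\<lambda>z. exp (- w * z)) has_field_derivative - w * exp (- w * z)) (at z within ?S)" for z
      by (auto intro!: derivative_eq_intros)
    show "cmod (- w * exp (- w * z)) \<le> cmod w" if "z \<in> ?S" for z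
    proof -
      from that obtain u where "0 \<le> u" "u \<le> 1" "z = (1 - u) *\<^sub>R of_real s + u *\<^sub>R of_real t"
        by (auto simp: in_segment)
      then have "z = of_real ((1 - u) * s + u * t)" and "0 \<le> (1 - u) * s + u * t"
        using assms(2,3) by (simp_all add: scaleR_conv_of_real)
      then show ?thesis using exp_le_1 by (simp add: norm_mult mult_left_le)
    qed
  qed auto
  moreover have "cmod (exp (- w * of_real t) - exp (- w * of_real s)) \<le> 2"
    using norm_triangle_ineq4[of "exp (- w * of_real t)" "exp (- w * of_real s)"]
      exp_le_1[OF assms(2)] exp_le_1[OF assms(3)] by linarith
  ultimately show ?thesis by (simp flip: of_real_diff)
qed

section \<open>Hardy space basics and bounded multipliers\<close>

lemma open_half_plane: "open (half_plane a)"
  unfolding half_plane_def by (simp add: open_halfspace_Re_gt)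

lemma Complex_in_half_plane [simp]: "Complex \<alpha> \<xi> \<in> half_plane a \<longleftrightarrow> a < \<alpha>"
  by (simp add: half_plane_def)

lemma H2_holomorphic: "U \<in> H2 a \<Longrightarrow> U holomorphic_on half_plane a"
  by (simp add: H2_def)

lemma H2_hardy_sq_finite: "U \<in> H2 a \<Longrightarrow> hardy_sq a U < \<infinity>"
  by (simp add: H2_def)

lemma H2_vertical_line_continuous:
  assumes "U \<in> H2 a" "a < \<alpha>"
  shows "continuous_on UNIV (\<lambda>\<xi>. U (Complex \<alpha> \<xi>))"
  by (rule continuous_on_compose2[OF holomorphic_on_imp_continuous_on[OF H2_holomorphic[OF assms(1)]]])
    (use assms(2) in \<open>auto simp: Complex_eq half_plane_def intro!: continuous_intros\<close>)

lemma H2_vertical_line_measurable: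
  assumes "U \<in> H2 a" "a < \<alpha>"
  shows "(\<lambda>\<xi>. U (Complex \<alpha> \<xi>)) \<in> borel_measurable borel"
  using H2_vertical_line_continuous[OF assms] by (simp add: borel_measurable_continuous_onI)

lemma H2_vertical_line_sq_measurable:
  assumes "U \<in> H2 a" "a < \<alpha>"
  shows "(\<lambda>\<xi>. ennreal ((cmod (U (Complex \<alpha> \<xi>)))\<^sup>2)) \<in> borel_measurable lborel"
  using H2_vertical_line_measurable[OF assms] by measurable

lemma vertical_line_le_hardy_sq:
  "a < \<alpha> \<Longrightarrow> (\<integral>\<^sup>+ \<xi>. ennreal ((cmod (U (Complex \<alpha> \<xi>)))\<^sup>2) \<partial>lborel) \<le> hardy_sq a U"
  unfolding hardy_sq_def by (rule SUP_upper) simp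

lemma H2_vertical_line_square_integrable:
  assumes "U \<in> H2 a" "a < \<alpha>"
  shows "integrable lborel (\<lambda>\<xi>. (cmod (U (Complex \<alpha> \<xi>)))\<^sup>2)"
  unfolding integrable_iff_bounded
proof
  show "(\<lambda>\<xi>. (cmod (U (Complex \<alpha> \<xi>)))\<^sup>2) \<in> borel_measurable lborel"
    using H2_vertical_line_measurable[OF assms] by measurable
  show "(\<integral>\<^sup>+ \<xi>. ennreal (norm ((cmod (U (Complex \<alpha> \<xi>)))\<^sup>2)) \<partial>lborel) < \<infinity>"
    using vertical_line_le_hardy_sq[OF assms(2), of U] H2_hardy_sq_finite[OF assms(1)] by simp
qed

lemma H2_norm_le_sqrt:
  assumes "hardy_sq a V \<le> ennreal c" "0 \<le> c"
  shows "H2_norm a V \<le> sqrt c"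
  unfolding H2_norm_def
  using enn2real_mono[OF assms(1)] assms(2) by (simp add: real_sqrt_le_mono)

lemma hardy_sq_mult_le:
  assumes "\<And>\<alpha>. a < \<alpha> \<Longrightarrow> AE \<xi> in lborel. (cmod (m (Complex \<alpha> \<xi>)))\<^sup>2 \<le> g \<xi>"
  shows "hardy_sq a (\<lambda>p. m p * U p)
           \<le> (SUP \<alpha>\<in>{a<..}. \<integral>\<^sup>+ \<xi>. ennreal (g \<xi> * (cmod (U (Complex \<alpha> \<xi>)))\<^sup>2) \<partial>lborel)"
  unfolding hardy_sq_def
proof (rule SUP_subset_mono[OF order_refl], rule nn_integral_mono_AE)
  fix \<alpha> assume "\<alpha> \<in> {a<..}"
  then show "AE \<xi> in lborel. ennreal ((cmod (m (Complex \<alpha> \<xi>) * U (Complex \<alpha> \<xi>)))\<^sup>2)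
      \<le> ennreal (g \<xi> * (cmod (U (Complex \<alpha> \<xi>)))\<^sup>2)"
    using assms[of \<alpha>]
    by (auto elim!: eventually_mono intro!: ennreal_leI mult_right_mono simp: norm_mult power_mult_distrib)
qed

lemma H2_mult:
  assumes U: "U \<in> H2 a" and m: "m holomorphic_on half_plane a"
    and bound: "\<And>p. p \<in> half_plane a \<Longrightarrow> cmod (m p) \<le> b"
  shows "(\<lambda>p. m p * U p) \<in> H2 a" and "H2_norm a (\<lambda>p. m p * U p) \<le> b * H2_norm a U"
proof -
  have "cmod (m (Complex (a + 1) 0)) \<le> b" by (rule bound) simp
  then have "0 \<le> b" using norm_ge_zero order_trans by blast
  have "hardy_sq a (\<lambda>p. m p * U p)
      \<le> (SUP \<alpha>\<in>{a<..}. \<integral>\<^sup>+ \<xi>. ennreal (b\<^sup>2 * (cmod (U (Complex \<alpha> \<xi>)))\<^sup>2) \<partial>lborel)"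
    using bound by (intro hardy_sq_mult_le AE_I2 power_mono) auto
  also have "\<dots> = ennreal (b\<^sup>2) * hardy_sq a U"
  proof -
    have "(\<integral>\<^sup>+ \<xi>. ennreal (b\<^sup>2 * (cmod (U (Complex \<alpha> \<xi>)))\<^sup>2) \<partial>lborel)
        = ennreal (b\<^sup>2) * (\<integral>\<^sup>+ \<xi>. ennreal ((cmod (U (Complex \<alpha> \<xi>)))\<^sup>2) \<partial>lborel)"
      if "\<alpha> \<in> {a<..}" for \<alpha>
    proof -
      have "a < \<alpha>" using that by simp
      then show ?thesis
        using H2_vertical_line_sq_measurable[OF U] by (simp add: ennreal_mult' nn_integral_cmult)
    qed
    then show ?thesis
      unfolding hardy_sq_def SUP_mult_left_ennreal by (rule SUP_cong[OF refl])
  qed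
  also have "\<dots> = ennreal (b\<^sup>2 * enn2real (hardy_sq a U))"
    using H2_hardy_sq_finite[OF U] by (simp add: ennreal_mult'' ennreal_enn2real_if)
  finally have le: "hardy_sq a (\<lambda>p. m p * U p) \<le> ennreal (b\<^sup>2 * enn2real (hardy_sq a U))" .
  then show "(\<lambda>p. m p * U p) \<in> H2 a"
    using U m order.strict_trans1[OF le ennreal_less_top] by (auto simp: H2_def intro!: holomorphic_intros)
  have "H2_norm a (\<lambda>p. m p * U p) \<le> sqrt (b\<^sup>2 * enn2real (hardy_sq a U))"
    using le by (rule H2_norm_le_sqrt) simp
  also have "\<dots> = b * H2_norm a U"
    using \<open>0 \<le> b\<close> by (simp add: H2_norm_def real_sqrt_mult)
  finally show "H2_norm a (\<lambda>p. m p * U p) \<le> b * H2_norm a U" .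
qed

section \<open>Inner products along vertical lines\<close>

definition line_sq_norm :: "(complex \<Rightarrow> complex) \<Rightarrow> real \<Rightarrow> real" where
  "line_sq_norm U \<alpha> = (LINT \<xi>|lborel. (cmod (U (Complex \<alpha> \<xi>)))\<^sup>2)"

definition line_inner :: "(complex \<Rightarrow> complex) \<Rightarrow> real \<Rightarrow> real \<Rightarrow> complex" where
  "line_inner U \<alpha> \<beta> = (LINT \<xi>|lborel. U (Complex \<alpha> \<xi>) * cnj (U (Complex \<beta> \<xi>)))"

lemma norm_mult_le_sum_sq:
  fixes z w :: "'a::real_normed_vector"
  shows "norm z * norm w \<le> (norm z)\<^sup>2 + (norm w)\<^sup>2"
proof -
  have "0 \<le> norm z * norm w" by simp
  then show ?thesis
    using sum_squares_bound[of "norm z" "norm w"] by linarith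
qed

lemma H2_line_product_integrable:
  assumes U: "U \<in> H2 a" and "a < \<alpha>" "a < \<beta>"
  shows "integrable lborel (\<lambda>\<xi>. U (Complex \<alpha> \<xi>) * cnj (U (Complex \<beta> \<xi>)))"
proof (rule Bochner_Integration.integrable_bound)
  show "integrable lborel (\<lambda>\<xi>. (cmod (U (Complex \<alpha> \<xi>)))\<^sup>2 + (cmod (U (Complex \<beta> \<xi>)))\<^sup>2)"
    using H2_vertical_line_square_integrable[OF U] assms(2,3) by simp
  have "continuous_on UNIV (\<lambda>\<xi>. U (Complex \<alpha> \<xi>) * cnj (U (Complex \<beta> \<xi>)))"
    using H2_vertical_line_continuous[OF U] assms(2,3) by (intro continuous_intros) auto
  then show "(\<lambda>\<xi>. U (Complex \<alpha> \<xi>) * cnj (U (Complex \<beta> \<xi>))) \<in> borel_measurable lborel"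
    by (simp add: borel_measurable_continuous_onI)
  show "AE \<xi> in lborel. norm (U (Complex \<alpha> \<xi>) * cnj (U (Complex \<beta> \<xi>)))
      \<le> norm ((cmod (U (Complex \<alpha> \<xi>)))\<^sup>2 + (cmod (U (Complex \<beta> \<xi>)))\<^sup>2)"
    by (simp add: norm_mult norm_mult_le_sum_sq)
qed

lemma H2_reflected_product_holomorphic:
  assumes "U \<in> H2 a"
  shows "(\<lambda>s. U s * cnj (U (of_real c - cnj s))) holomorphic_on {s. a < Re s \<and> a < c - Re s}"
proof -
  have "cnj ` half_plane a = half_plane a"
    by (auto simp: half_plane_def image_iff intro!: exI[of _ "cnj _"])
  then have "(cnj \<circ> U \<circ> cnj) holomorphic_on half_plane a"
    using H2_holomorphic[OF assms] open_half_plane by (intro holomorphic_on_compose_cnj_cnj) auto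
  then have "(\<lambda>s. (cnj \<circ> U \<circ> cnj) (of_real c - s)) holomorphic_on {s. a < Re s \<and> a < c - Re s}"
    by (rule holomorphic_on_compose_gen[unfolded o_def, rotated])
       (auto simp: half_plane_def intro!: holomorphic_intros)
  moreover have "U holomorphic_on {s. a < Re s \<and> a < c - Re s}"
    by (rule holomorphic_on_subset[OF H2_holomorphic[OF assms]]) (auto simp: half_plane_def)
  ultimately show ?thesis
    by (auto intro!: holomorphic_intros)
qed

lemma H2_line_product_strip_finite:
  assumes U: "U \<in> H2 a" and "a < x0" "x0 \<le> x1" "a < c - x1"
  shows "(\<integral>\<^sup>+ x. (\<integral>\<^sup>+ y. ennreal (cmod (U (Complex x y) * cnj (U (Complex (c - x) y)))) \<partial>lborel)
           * indicator {x0..x1} x \<partial>lborel) < \<infinity>"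
proof -
  have "(\<integral>\<^sup>+ y. ennreal (cmod (U (Complex x y) * cnj (U (Complex (c - x) y)))) \<partial>lborel) \<le> 2 * hardy_sq a U"
    if "x \<in> {x0..x1}" for x
  proof -
    have x: "a < x" "a < c - x" using that assms by auto
    have "(\<integral>\<^sup>+ y. ennreal (cmod (U (Complex x y) * cnj (U (Complex (c - x) y)))) \<partial>lborel)
        \<le> (\<integral>\<^sup>+ y. ennreal ((cmod (U (Complex x y)))\<^sup>2) + ennreal ((cmod (U (Complex (c - x) y)))\<^sup>2) \<partial>lborel)"
      using norm_mult_le_sum_sq
      by (intro nn_integral_mono) (simp add: norm_mult ennreal_plus[symmetric] del: ennreal_plus)
    also have "\<dots> = (\<integral>\<^sup>+ y. ennreal ((cmod (U (Complex x y)))\<^sup>2) \<partial>lborel)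
        + (\<integral>\<^sup>+ y. ennreal ((cmod (U (Complex (c - x) y)))\<^sup>2) \<partial>lborel)"
      using H2_vertical_line_sq_measurable[OF U x(1)] H2_vertical_line_sq_measurable[OF U x(2)]
      by (rule nn_integral_add)
    also have "\<dots> \<le> hardy_sq a U + hardy_sq a U"
      using x by (intro add_mono vertical_line_le_hardy_sq)
    finally show ?thesis by (simp add: mult_2)
  qed
  then have "(\<integral>\<^sup>+ x. (\<integral>\<^sup>+ y. ennreal (cmod (U (Complex x y) * cnj (U (Complex (c - x) y)))) \<partial>lborel)
        * indicator {x0..x1} x \<partial>lborel) \<le> (\<integral>\<^sup>+ x. 2 * hardy_sq a U * indicator {x0..x1} x \<partial>lborel)"
    by (intro nn_integral_mono) (simp split: split_indicator)
  also have "\<dots> = 2 * hardy_sq a U * ennreal (x1 - x0)"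
    using assms(3) by (simp add: nn_integral_cmult_indicator)
  also have "\<dots> < \<infinity>"
    using H2_hardy_sq_finite[OF U] by (simp add: ennreal_mult_less_top)
  finally show ?thesis .
qed

lemma line_inner_shift_lt:
  assumes U: "U \<in> H2 a" and "a < \<alpha>" "\<alpha> < \<gamma>" "a < c - \<gamma>"
  shows "line_inner U \<alpha> (c - \<alpha>) = line_inner U \<gamma> (c - \<gamma>)"
proof -
  define f where "f s = U s * cnj (U (of_real c - cnj s))" for s
  have f_line: "f (Complex x y) = U (Complex x y) * cnj (U (Complex (c - x) y))" for x y
  proof -
    have "of_real c - cnj (Complex x y) = Complex (c - x) y" by (simp add: complex_eq_iff)
    then show ?thesis by (simp add: f_def)
  qed
  have "f holomorphic_on {s. \<alpha> \<le> Re s \<and> Re s \<le> \<gamma>}"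
    unfolding f_def[abs_def]
    by (rule holomorphic_on_subset[OF H2_reflected_product_holomorphic[OF U]]) (use assms in auto)
  moreover have "integrable lborel (\<lambda>y. f (Complex x y))" if "x = \<alpha> \<or> x = \<gamma>" for x
    unfolding f_line using that assms by (intro H2_line_product_integrable[OF U]) auto
  moreover have "(\<integral>\<^sup>+ x. (\<integral>\<^sup>+ y. ennreal (cmod (f (Complex x y))) \<partial>lborel) * indicator {\<alpha>..\<gamma>} x \<partial>lborel) < \<infinity>"
    unfolding f_line using assms by (intro H2_line_product_strip_finite[OF U]) auto
  ultimately have "(LINT y|lborel. f (Complex \<alpha> y)) = (LINT y|lborel. f (Complex \<gamma> y))"
    using assms(3) by (intro holomorphic_strip_vertical_integrals_eq) auto
  then show ?thesis
    by (simp add: line_inner_def f_line)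
qed

lemma line_inner_shift:
  assumes U: "U \<in> H2 a" and "a < \<alpha>" "a < \<beta>" "a < \<gamma>" "a < \<delta>" "\<alpha> + \<beta> = \<gamma> + \<delta>"
  shows "line_inner U \<alpha> \<beta> = line_inner U \<gamma> \<delta>"
proof -
  define c where "c = \<alpha> + \<beta>"
  have \<beta>: "\<beta> = c - \<alpha>" and \<delta>: "\<delta> = c - \<gamma>"
    using assms(6) by (simp_all add: c_def)
  consider "\<alpha> < \<gamma>" | "\<alpha> = \<gamma>" | "\<gamma> < \<alpha>" by linarith
  then show ?thesis
  proof cases
    case 1
    show ?thesis
      unfolding \<beta> \<delta> by (rule line_inner_shift_lt[OF U assms(2) 1 assms(5)[unfolded \<delta>]])
  next
    case 2
    then show ?thesis unfolding \<beta> \<delta> by simp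
  next
    case 3
    show ?thesis
      unfolding \<beta> \<delta> by (rule line_inner_shift_lt[OF U assms(4) 3 assms(3)[unfolded \<beta>], symmetric])
  qed
qed

lemma log_convex_seq_geometric_growth:
  fixes s :: "nat \<Rightarrow> real"
  assumes log_convex: "\<And>n. (s (Suc n))\<^sup>2 \<le> s n * s (Suc (Suc n))"
    and "0 < s 0" "1 < r" "r * s 0 \<le> s 1"
  shows "r ^ n * s 0 \<le> s n"
proof -
  have step: "0 < s n \<and> r * s n \<le> s (Suc n)" for n
  proof (induction n)
    case 0
    then show ?case using assms(2,4) by simp
  next
    case (Suc n)
    have "0 < r * s n" using Suc \<open>1 < r\<close> by simp
    then have "0 < s (Suc n)" using Suc by linarith
    have "r * s (Suc n) * s n \<le> s (Suc n) * s (Suc n)"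
      using Suc \<open>0 < s (Suc n)\<close> by (simp add: mult.commute mult.left_commute mult_left_mono)
    also have "\<dots> \<le> s (Suc (Suc n)) * s n"
      using log_convex[of n] by (simp add: power2_eq_square mult.commute)
    finally show ?case using Suc \<open>0 < s (Suc n)\<close> by simp
  qed
  show ?thesis
  proof (induction n)
    case (Suc n)
    then have "r ^ Suc n * s 0 \<le> r * s n" using \<open>1 < r\<close> by (simp add: mult.assoc)
    then show ?case using step[of n] by simp
  qed simp
qed

lemma bounded_log_convex_seq_decseq:
  fixes s :: "nat \<Rightarrow> real"
  assumes "\<And>n. 0 \<le> s n" "\<And>n. (s (Suc n))\<^sup>2 \<le> s n * s (Suc (Suc n))" "\<And>n. s n \<le> M"
  shows "decseq s"
proof (rule decseq_SucI)
  fix k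
  define t where "t n = s (k + n)" for n
  have nonneg: "0 \<le> t n" and log_convex: "(t (Suc n))\<^sup>2 \<le> t n * t (Suc (Suc n))" and "t n \<le> M" for n
    using assms by (simp_all add: t_def)
  show "s (Suc k) \<le> s k"
  proof (rule ccontr)
    assume "\<not> s (Suc k) \<le> s k"
    then have "t 0 < t 1" by (simp add: t_def)
    have "0 < t 0"
    proof (rule ccontr)
      assume "\<not> 0 < t 0"
      then have "(t 1)\<^sup>2 \<le> 0" using log_convex[of 0] nonneg[of 0] by simp
      then show False using \<open>t 0 < t 1\<close> nonneg[of 0] by simp
    qed
    define r where "r = t 1 / t 0"
    have "1 < r" "r * t 0 \<le> t 1" using \<open>0 < t 0\<close> \<open>t 0 < t 1\<close> by (simp_all add: r_def)
    obtain n where "M / t 0 < r ^ n" using real_arch_pow[OF \<open>1 < r\<close>] by blast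
    then show False
      using log_convex_seq_geometric_growth[OF log_convex \<open>0 < t 0\<close> \<open>1 < r\<close> \<open>r * t 0 \<le> t 1\<close>, of n]
        \<open>t n \<le> M\<close> \<open>0 < t 0\<close>
      by (simp add: divide_less_eq)
  qed
qed

lemma line_sq_norm_nonneg: "0 \<le> line_sq_norm U \<alpha>"
  by (simp add: line_sq_norm_def)

lemma line_inner_self: "line_inner U \<alpha> \<alpha> = of_real (line_sq_norm U \<alpha>)"
proof -
  have "line_inner U \<alpha> \<alpha> = (LINT \<xi>|lborel. complex_of_real ((cmod (U (Complex \<alpha> \<xi>)))\<^sup>2))"
    unfolding line_inner_def complex_norm_square ..
  then show ?thesis by (simp only: line_sq_norm_def integral_complex_of_real)
qed

lemma H2_ennreal_line_sq_norm:
  assumes "U \<in> H2 a" "a < \<alpha>"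
  shows "ennreal (line_sq_norm U \<alpha>) = (\<integral>\<^sup>+ \<xi>. ennreal ((cmod (U (Complex \<alpha> \<xi>)))\<^sup>2) \<partial>lborel)"
  unfolding line_sq_norm_def
  by (rule nn_integral_eq_integral[symmetric, OF H2_vertical_line_square_integrable[OF assms]]) simp

lemma H2_line_sq_norm_le:
  assumes "U \<in> H2 a" "a < \<alpha>"
  shows "line_sq_norm U \<alpha> \<le> enn2real (hardy_sq a U)"
proof -
  have "ennreal (line_sq_norm U \<alpha>) \<le> hardy_sq a U"
    unfolding H2_ennreal_line_sq_norm[OF assms] by (rule vertical_line_le_hardy_sq[OF assms(2)])
  then have "enn2real (ennreal (line_sq_norm U \<alpha>)) \<le> enn2real (hardy_sq a U)"
    by (rule enn2real_mono) (use H2_hardy_sq_finite[OF assms(1)] in simp)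
  then show ?thesis
    using line_sq_norm_nonneg by simp
qed

lemma H2_norm_line_inner_sq_le:
  assumes U: "U \<in> H2 a" and "a < \<alpha>" "a < \<beta>"
  shows "(cmod (line_inner U \<alpha> \<beta>))\<^sup>2 \<le> line_sq_norm U \<alpha> * line_sq_norm U \<beta>"
proof -
  let ?A = "\<lambda>\<xi>. cmod (U (Complex \<alpha> \<xi>))" and ?B = "\<lambda>\<xi>. cmod (U (Complex \<beta> \<xi>))"
  have int: "integrable lborel (\<lambda>\<xi>. ?A \<xi> * ?B \<xi>)"
    using integrable_norm[OF H2_line_product_integrable[OF assms]] by (simp add: norm_mult)
  define L where "L = (LINT \<xi>|lborel. ?A \<xi> * ?B \<xi>)"
  have "cmod (line_inner U \<alpha> \<beta>) \<le> (LINT \<xi>|lborel. cmod (U (Complex \<alpha> \<xi>) * cnj (U (Complex \<beta> \<xi>))))"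
    unfolding line_inner_def by (rule integral_norm_bound)
  also have "\<dots> = L"
    by (simp add: L_def norm_mult)
  finally have "(cmod (line_inner U \<alpha> \<beta>))\<^sup>2 \<le> L\<^sup>2"
    by (simp add: power_mono)
  moreover have "ennreal (L\<^sup>2) \<le> ennreal (line_sq_norm U \<alpha> * line_sq_norm U \<beta>)"
  proof -
    have "(\<lambda>\<xi>. ennreal (?A \<xi>)) \<in> borel_measurable lborel" "(\<lambda>\<xi>. ennreal (?B \<xi>)) \<in> borel_measurable lborel"
      using H2_vertical_line_measurable[OF U assms(2)] H2_vertical_line_measurable[OF U assms(3)]
      by measurable
    note Cauchy_Schwarz = Cauchy_Schwarz_nn_integral[OF this]
    have "ennreal (L\<^sup>2) = (\<integral>\<^sup>+\<xi>. ennreal (?A \<xi>) * ennreal (?B \<xi>) \<partial>lborel)\<^sup>2"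
      unfolding L_def by (simp add: ennreal_power ennreal_mult'[symmetric] nn_integral_eq_integral[OF int])
    also have "\<dots> \<le> (\<integral>\<^sup>+\<xi>. ennreal (?A \<xi>) ^ 2 \<partial>lborel) * (\<integral>\<^sup>+\<xi>. ennreal (?B \<xi>) ^ 2 \<partial>lborel)"
      by (rule Cauchy_Schwarz)
    also have "\<dots> = ennreal (line_sq_norm U \<alpha> * line_sq_norm U \<beta>)"
      by (simp add: H2_ennreal_line_sq_norm[OF U assms(2)] H2_ennreal_line_sq_norm[OF U assms(3)]
          ennreal_power ennreal_mult'' line_sq_norm_nonneg)
    finally show ?thesis .
  qed
  then have "L\<^sup>2 \<le> line_sq_norm U \<alpha> * line_sq_norm U \<beta>"
    by (simp add: ennreal_le_iff line_sq_norm_nonneg)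
  ultimately show ?thesis
    by linarith
qed

lemma H2_line_sq_norm_log_convex:
  assumes U: "U \<in> H2 a" and "a < x - h" "0 \<le> h"
  shows "(line_sq_norm U x)\<^sup>2 \<le> line_sq_norm U (x - h) * line_sq_norm U (x + h)"
proof -
  have "(line_sq_norm U x)\<^sup>2 = (cmod (line_inner U x x))\<^sup>2"
    by (simp add: line_inner_self)
  also have "line_inner U x x = line_inner U (x - h) (x + h)"
    using assms by (intro line_inner_shift[OF U]) auto
  also have "(cmod (line_inner U (x - h) (x + h)))\<^sup>2 \<le> line_sq_norm U (x - h) * line_sq_norm U (x + h)"
    using assms by (intro H2_norm_line_inner_sq_le[OF U]) auto
  finally show ?thesis .
qed

lemma H2_line_sq_norm_antimono:
  assumes U: "U \<in> H2 a" and "a < \<alpha>" "\<alpha> \<le> \<beta>"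
  shows "line_sq_norm U \<beta> \<le> line_sq_norm U \<alpha>"
proof -
  define h where "h = \<beta> - \<alpha>"
  define s where "s n = line_sq_norm U (\<alpha> + real n * h)" for n
  have a_less: "a < \<alpha> + real n * h" for n
  proof -
    have "0 \<le> real n * h" using assms(3) by (simp add: h_def)
    then show ?thesis using assms(2) by linarith
  qed
  have "decseq s"
  proof (rule bounded_log_convex_seq_decseq)
    show "0 \<le> s n" for n
      by (simp add: s_def line_sq_norm_nonneg)
    show "(s (Suc n))\<^sup>2 \<le> s n * s (Suc (Suc n))" for n
    proof -
      have h: "0 \<le> h" using assms(3) by (simp add: h_def)
      have shift: "\<alpha> + real (Suc n) * h - h = \<alpha> + real n * h"
        "\<alpha> + real (Suc n) * h + h = \<alpha> + real (Suc (Suc n)) * h"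
        by (simp_all add: algebra_simps)
      have "(line_sq_norm U (\<alpha> + real (Suc n) * h))\<^sup>2
          \<le> line_sq_norm U (\<alpha> + real (Suc n) * h - h) * line_sq_norm U (\<alpha> + real (Suc n) * h + h)"
        by (rule H2_line_sq_norm_log_convex[OF U _ h]) (simp only: shift(1) a_less)
      then show ?thesis
        unfolding shift s_def .
    qed
    show "s n \<le> enn2real (hardy_sq a U)" for n
      unfolding s_def by (rule H2_line_sq_norm_le[OF U a_less])
  qed
  then have "s 1 \<le> s 0"
    by (simp add: decseq_def)
  then show ?thesis
    by (simp add: s_def h_def)
qed

lemma integral_cmod_diff_sq:
  fixes f g :: "'a \<Rightarrow> complex"
  assumes "integrable M (\<lambda>x. (cmod (f x))\<^sup>2)" "integrable M (\<lambda>x. (cmod (g x))\<^sup>2)"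
    and "integrable M (\<lambda>x. f x * cnj (g x))"
  shows "(\<integral>x. (cmod (f x - g x))\<^sup>2 \<partial>M)
       = (\<integral>x. (cmod (f x))\<^sup>2 \<partial>M) + (\<integral>x. (cmod (g x))\<^sup>2 \<partial>M) - 2 * Re (\<integral>x. f x * cnj (g x) \<partial>M)"
proof -
  have expand: "(cmod (z - w))\<^sup>2 = ((cmod z)\<^sup>2 + (cmod w)\<^sup>2) - 2 * Re (z * cnj w)" for z w :: complex
    unfolding cmod_power2 by (simp add: power2_eq_square algebra_simps)
  have "(\<integral>x. (cmod (f x - g x))\<^sup>2 \<partial>M)
      = (\<integral>x. (cmod (f x))\<^sup>2 + (cmod (g x))\<^sup>2 \<partial>M) - (\<integral>x. 2 * Re (f x * cnj (g x)) \<partial>M)"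
    unfolding expand
    by (intro Bochner_Integration.integral_diff Bochner_Integration.integrable_add
        integrable_mult_right integrable_Re assms)
  also have "(\<integral>x. (cmod (f x))\<^sup>2 + (cmod (g x))\<^sup>2 \<partial>M) = (\<integral>x. (cmod (f x))\<^sup>2 \<partial>M) + (\<integral>x. (cmod (g x))\<^sup>2 \<partial>M)"
    using assms by (intro Bochner_Integration.integral_add)
  also have "(\<integral>x. 2 * Re (f x * cnj (g x)) \<partial>M) = 2 * Re (\<integral>x. f x * cnj (g x) \<partial>M)"
    by (simp only: integral_mult_right_zero integral_Re[OF assms(3)])
  finally show ?thesis .
qed

lemma H2_line_dist_sq_le:
  assumes U: "U \<in> H2 a" and "a < \<alpha>" "\<alpha> \<le> \<beta>"
  shows "(LINT \<xi>|lborel. (cmod (U (Complex \<alpha> \<xi>) - U (Complex \<beta> \<xi>)))\<^sup>2)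
           \<le> line_sq_norm U \<alpha> - line_sq_norm U \<beta>"
proof -
  define m where "m = (\<alpha> + \<beta>) / 2"
  have "a < \<beta>" "a < m" "m \<le> \<beta>" using assms by (auto simp: m_def)
  have "(LINT \<xi>|lborel. (cmod (U (Complex \<alpha> \<xi>) - U (Complex \<beta> \<xi>)))\<^sup>2)
      = line_sq_norm U \<alpha> + line_sq_norm U \<beta> - 2 * Re (line_inner U \<alpha> \<beta>)"
    unfolding line_sq_norm_def line_inner_def using assms \<open>a < \<beta>\<close>
    by (intro integral_cmod_diff_sq H2_vertical_line_square_integrable[OF U]
        H2_line_product_integrable[OF U])
  also have "line_inner U \<alpha> \<beta> = of_real (line_sq_norm U m)"
    using line_inner_shift[OF U assms(2) \<open>a < \<beta>\<close> \<open>a < m\<close> \<open>a < m\<close>]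
    by (simp add: m_def line_inner_self)
  finally have "(LINT \<xi>|lborel. (cmod (U (Complex \<alpha> \<xi>) - U (Complex \<beta> \<xi>)))\<^sup>2)
      = line_sq_norm U \<alpha> + line_sq_norm U \<beta> - 2 * line_sq_norm U m"
    by simp
  moreover have "line_sq_norm U \<beta> \<le> line_sq_norm U m"
    by (rule H2_line_sq_norm_antimono[OF U \<open>a < m\<close> \<open>m \<le> \<beta>\<close>])
  ultimately show ?thesis by linarith
qed

section \<open>Uniform smallness along all vertical lines\<close>

lemma norm_power2_le_diff_add:
  fixes x y :: "'a::real_normed_vector"
  shows "(norm x)\<^sup>2 \<le> 2 * (norm (x - y))\<^sup>2 + 2 * (norm y)\<^sup>2"
proof -
  have "(norm x)\<^sup>2 \<le> (norm (x - y) + norm y)\<^sup>2"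
    using norm_triangle_ineq[of "x - y" y] by (simp add: power_mono)
  also have "\<dots> \<le> 2 * (norm (x - y))\<^sup>2 + 2 * (norm y)\<^sup>2"
    using sum_squares_bound[of "norm (x - y)" "norm y"] by (simp add: power2_sum)
  finally show ?thesis .
qed

lemma H2_line_diff_sq_integrable:
  assumes U: "U \<in> H2 a" and "a < \<alpha>" "a < \<beta>"
  shows "integrable lborel (\<lambda>\<xi>. (cmod (U (Complex \<alpha> \<xi>) - U (Complex \<beta> \<xi>)))\<^sup>2)"
proof (rule Bochner_Integration.integrable_bound)
  show "integrable lborel (\<lambda>\<xi>. 2 * (cmod (U (Complex \<alpha> \<xi>)))\<^sup>2 + 2 * (cmod (U (Complex \<beta> \<xi>)))\<^sup>2)"
    using H2_vertical_line_square_integrable[OF U] assms(2,3) by simp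
  show "(\<lambda>\<xi>. (cmod (U (Complex \<alpha> \<xi>) - U (Complex \<beta> \<xi>)))\<^sup>2) \<in> borel_measurable lborel"
    using H2_vertical_line_measurable[OF U assms(2)] H2_vertical_line_measurable[OF U assms(3)]
    by measurable
  show "AE \<xi> in lborel. norm ((cmod (U (Complex \<alpha> \<xi>) - U (Complex \<beta> \<xi>)))\<^sup>2)
      \<le> norm (2 * (cmod (U (Complex \<alpha> \<xi>)))\<^sup>2 + 2 * (cmod (U (Complex \<beta> \<xi>)))\<^sup>2)"
    using norm_power2_le_diff_add[of "U (Complex \<alpha> \<xi>) - U (Complex \<beta> \<xi>)" "- U (Complex \<beta> \<xi>)" for \<xi>]
    by simp
qed

lemma H2_line_dist_sq_le_abs:
  assumes U: "U \<in> H2 a" and "a < \<alpha>" "a < \<beta>"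
  shows "(LINT \<xi>|lborel. (cmod (U (Complex \<alpha> \<xi>) - U (Complex \<beta> \<xi>)))\<^sup>2)
           \<le> \<bar>line_sq_norm U \<alpha> - line_sq_norm U \<beta>\<bar>"
proof (cases "\<alpha> \<le> \<beta>")
  case True
  then show ?thesis using H2_line_dist_sq_le[OF U assms(2)] by fastforce
next
  case False
  then show ?thesis using H2_line_dist_sq_le[OF U assms(3), of \<alpha>] by (simp add: norm_minus_commute)
qed

lemma H2_lines_finite_net:
  assumes U: "U \<in> H2 a" and "0 < \<eta>"
  shows "\<exists>B. finite B \<and> B \<subseteq> {a<..} \<and>
    (\<forall>\<alpha>>a. \<exists>\<beta>\<in>B. (LINT \<xi>|lborel. (cmod (U (Complex \<alpha> \<xi>) - U (Complex \<beta> \<xi>)))\<^sup>2) \<le> \<eta>)"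
proof -
  \<comment> \<open>lines whose \<open>line_sq_norm\<close> falls into the same one of finitely many bins of width \<open>\<eta>\<close> are \<open>\<eta>\<close>-close\<close>
  define bin where "bin \<alpha> = nat \<lfloor>line_sq_norm U \<alpha> / \<eta>\<rfloor>" for \<alpha>
  define K where "K = nat \<lceil>enn2real (hardy_sq a U) / \<eta>\<rceil>"
  define rep where "rep k = (SOME \<beta>. a < \<beta> \<and> bin \<beta> = k)" for k
  define B where "B = rep ` {k. k \<le> K \<and> (\<exists>\<beta>. a < \<beta> \<and> bin \<beta> = k)}"
  have bin_bounds: "real (bin \<alpha>) * \<eta> \<le> line_sq_norm U \<alpha> \<and> line_sq_norm U \<alpha> < (real (bin \<alpha>) + 1) * \<eta>"
    for \<alpha>
  proof -
    define q where "q = line_sq_norm U \<alpha> / \<eta>"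
    have "0 \<le> q" using \<open>0 < \<eta>\<close> line_sq_norm_nonneg by (simp add: q_def)
    then have "real (bin \<alpha>) = of_int \<lfloor>q\<rfloor>" by (simp add: bin_def q_def)
    moreover have "of_int \<lfloor>q\<rfloor> * \<eta> \<le> line_sq_norm U \<alpha>"
      using of_int_floor_le[of q] pos_le_divide_eq[OF \<open>0 < \<eta>\<close>] unfolding q_def by blast
    moreover have "line_sq_norm U \<alpha> < (of_int \<lfloor>q\<rfloor> + 1) * \<eta>"
      using real_of_int_floor_add_one_gt[of q] pos_divide_less_eq[OF \<open>0 < \<eta>\<close>] unfolding q_def by blast
    ultimately show ?thesis by simp
  qed
  have "finite B" by (simp add: B_def)
  moreover have "B \<subseteq> {a<..}"
    unfolding B_def rep_def by (auto intro: someI2_ex)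
  moreover have "\<exists>\<beta>\<in>B. (LINT \<xi>|lborel. (cmod (U (Complex \<alpha> \<xi>) - U (Complex \<beta> \<xi>)))\<^sup>2) \<le> \<eta>" if "a < \<alpha>" for \<alpha>
  proof -
    have "bin \<alpha> \<le> K"
      unfolding bin_def K_def using H2_line_sq_norm_le[OF U that] \<open>0 < \<eta>\<close>
      by (intro nat_mono order_trans[OF floor_le_ceiling ceiling_mono] divide_right_mono) auto
    then have "rep (bin \<alpha>) \<in> B" using that by (auto simp: B_def)
    moreover have "a < rep (bin \<alpha>) \<and> bin (rep (bin \<alpha>)) = bin \<alpha>"
      unfolding rep_def by (rule someI[where x = \<alpha>]) (simp add: that)
    ultimately show ?thesis
      using bin_bounds[of \<alpha>] bin_bounds[of "rep (bin \<alpha>)"] that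
        H2_line_dist_sq_le_abs[OF U that, of "rep (bin \<alpha>)"]
      by (intro bexI[of _ "rep (bin \<alpha>)"]) (auto simp: algebra_simps abs_le_iff)
  qed
  ultimately show ?thesis by blast
qed

lemma H2_weighted_line_integrable:
  assumes U: "U \<in> H2 a" "a < \<alpha>"
    and g: "g \<in> borel_measurable borel" "\<And>\<xi>. 0 \<le> g \<xi>" "\<And>\<xi>. g \<xi> \<le> C"
  shows "integrable lborel (\<lambda>\<xi>. g \<xi> * (cmod (U (Complex \<alpha> \<xi>)))\<^sup>2)"
proof (rule Bochner_Integration.integrable_bound)
  show "integrable lborel (\<lambda>\<xi>. C * (cmod (U (Complex \<alpha> \<xi>)))\<^sup>2)"
    using H2_vertical_line_square_integrable[OF U] by simp
  show "(\<lambda>\<xi>. g \<xi> * (cmod (U (Complex \<alpha> \<xi>)))\<^sup>2) \<in> borel_measurable lborel"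
    using g(1) H2_vertical_line_measurable[OF U] by measurable
  show "AE \<xi> in lborel. norm (g \<xi> * (cmod (U (Complex \<alpha> \<xi>)))\<^sup>2) \<le> norm (C * (cmod (U (Complex \<alpha> \<xi>)))\<^sup>2)"
    using g(2,3) order_trans[OF g(2) g(3)] by (simp add: abs_mult mult_right_mono)
qed

lemma SUP_weighted_lines_le:
  assumes U: "U \<in> H2 a"
    and g: "g \<in> borel_measurable borel" "\<And>\<xi>. 0 \<le> g \<xi>" "\<And>\<xi>. g \<xi> \<le> C"
    and le: "\<And>\<alpha>. a < \<alpha> \<Longrightarrow> (LINT \<xi>|lborel. g \<xi> * (cmod (U (Complex \<alpha> \<xi>)))\<^sup>2) \<le> \<epsilon>"
  shows "(SUP \<alpha>\<in>{a<..}. \<integral>\<^sup>+ \<xi>. ennreal (g \<xi> * (cmod (U (Complex \<alpha> \<xi>)))\<^sup>2) \<partial>lborel) \<le> ennreal \<epsilon>"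
proof (rule SUP_least)
  fix \<alpha> assume "\<alpha> \<in> {a<..}"
  then have "a < \<alpha>" by simp
  have "(\<integral>\<^sup>+ \<xi>. ennreal (g \<xi> * (cmod (U (Complex \<alpha> \<xi>)))\<^sup>2) \<partial>lborel)
      = ennreal (LINT \<xi>|lborel. g \<xi> * (cmod (U (Complex \<alpha> \<xi>)))\<^sup>2)"
    using g(2) by (intro nn_integral_eq_integral H2_weighted_line_integrable[OF U \<open>a < \<alpha>\<close> g]) auto
  also have "\<dots> \<le> ennreal \<epsilon>"
    using le[OF \<open>a < \<alpha>\<close>] by (rule ennreal_leI)
  finally show "(\<integral>\<^sup>+ \<xi>. ennreal (g \<xi> * (cmod (U (Complex \<alpha> \<xi>)))\<^sup>2) \<partial>lborel) \<le> ennreal \<epsilon>" .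
qed

lemma H2_weighted_line_tendsto_zero:
  fixes g :: "real \<Rightarrow> real \<Rightarrow> real"
  assumes U: "U \<in> H2 a" "a < \<beta>"
    and g: "\<And>d. g d \<in> borel_measurable borel" "\<And>d \<xi>. 0 \<le> g d \<xi>" "\<And>d \<xi>. g d \<xi> \<le> C"
    and g_lim: "AE \<xi> in lborel. ((\<lambda>d. g d \<xi>) \<longlongrightarrow> 0) (at_right 0)"
  shows "((\<lambda>d. LINT \<xi>|lborel. g d \<xi> * (cmod (U (Complex \<beta> \<xi>)))\<^sup>2) \<longlongrightarrow> 0) (at_right 0)"
proof (rule tendsto_at_right_sequentially[where b = 1])
  fix S :: "nat \<Rightarrow> real"
  assume S: "\<And>n. 0 < S n" "\<And>n. S n < 1" "decseq S" "S \<longlonglongrightarrow> 0"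
  then have S_right: "filterlim S (at_right 0) sequentially"
    by (intro tendsto_imp_filterlim_at_right always_eventually allI) auto
  have "(\<lambda>n. LINT \<xi>|lborel. g (S n) \<xi> * (cmod (U (Complex \<beta> \<xi>)))\<^sup>2) \<longlonglongrightarrow> (LINT (\<xi>::real)|lborel. 0)"
  proof (rule integral_dominated_convergence[where w = "\<lambda>\<xi>. C * (cmod (U (Complex \<beta> \<xi>)))\<^sup>2"])
    show "integrable lborel (\<lambda>\<xi>. C * (cmod (U (Complex \<beta> \<xi>)))\<^sup>2)"
      using H2_vertical_line_square_integrable[OF U] by simp
    show "(\<lambda>\<xi>. g (S n) \<xi> * (cmod (U (Complex \<beta> \<xi>)))\<^sup>2) \<in> borel_measurable lborel" for n
      using g(1) H2_vertical_line_measurable[OF U] by measurable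
    show "AE \<xi> in lborel. norm (g (S n) \<xi> * (cmod (U (Complex \<beta> \<xi>)))\<^sup>2) \<le> C * (cmod (U (Complex \<beta> \<xi>)))\<^sup>2" for n
      using g(2,3) by (simp add: abs_mult mult_right_mono)
    show "AE \<xi> in lborel. (\<lambda>n. g (S n) \<xi> * (cmod (U (Complex \<beta> \<xi>)))\<^sup>2) \<longlonglongrightarrow> 0"
      using g_lim
    proof eventually_elim
      case (elim \<xi>)
      then have "(\<lambda>n. g (S n) \<xi>) \<longlonglongrightarrow> 0" by (rule filterlim_compose[OF _ S_right])
      then show ?case by (simp add: tendsto_mult_left_zero)
    qed
  qed simp
  then show "(\<lambda>n. LINT \<xi>|lborel. g (S n) \<xi> * (cmod (U (Complex \<beta> \<xi>)))\<^sup>2) \<longlonglongrightarrow> 0"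
    by simp
qed simp

lemma H2_weighted_line_le_near_line:
  assumes U: "U \<in> H2 a" and "a < \<alpha>" "a < \<beta>"
    and g: "g \<in> borel_measurable borel" "\<And>\<xi>. 0 \<le> g \<xi>" "\<And>\<xi>. g \<xi> \<le> C"
  shows "(LINT \<xi>|lborel. g \<xi> * (cmod (U (Complex \<alpha> \<xi>)))\<^sup>2)
    \<le> 2 * C * (LINT \<xi>|lborel. (cmod (U (Complex \<alpha> \<xi>) - U (Complex \<beta> \<xi>)))\<^sup>2)
      + 2 * (LINT \<xi>|lborel. g \<xi> * (cmod (U (Complex \<beta> \<xi>)))\<^sup>2)"
proof -
  note int = H2_weighted_line_integrable[OF U(1) _ g]
    and int_diff = H2_line_diff_sq_integrable[OF U assms(2,3)]
  have "(LINT \<xi>|lborel. g \<xi> * (cmod (U (Complex \<alpha> \<xi>)))\<^sup>2)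
      \<le> (LINT \<xi>|lborel. 2 * C * (cmod (U (Complex \<alpha> \<xi>) - U (Complex \<beta> \<xi>)))\<^sup>2
            + 2 * (g \<xi> * (cmod (U (Complex \<beta> \<xi>)))\<^sup>2))"
  proof (rule integral_mono)
    show "integrable lborel (\<lambda>\<xi>. g \<xi> * (cmod (U (Complex \<alpha> \<xi>)))\<^sup>2)"
      by (rule int[OF assms(2)])
    show "integrable lborel (\<lambda>\<xi>. 2 * C * (cmod (U (Complex \<alpha> \<xi>) - U (Complex \<beta> \<xi>)))\<^sup>2
            + 2 * (g \<xi> * (cmod (U (Complex \<beta> \<xi>)))\<^sup>2))"
      using int_diff int[OF assms(3)] by simp
    fix \<xi>
    let ?A = "U (Complex \<alpha> \<xi>)" and ?B = "U (Complex \<beta> \<xi>)"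
    have "g \<xi> * (cmod ?A)\<^sup>2 \<le> g \<xi> * (2 * (cmod (?A - ?B))\<^sup>2 + 2 * (cmod ?B)\<^sup>2)"
      by (rule mult_left_mono[OF norm_power2_le_diff_add g(2)])
    also have "\<dots> \<le> 2 * C * (cmod (?A - ?B))\<^sup>2 + 2 * (g \<xi> * (cmod ?B)\<^sup>2)"
      using g(3)[of \<xi>] by (simp add: algebra_simps mult_right_mono)
    finally show "g \<xi> * (cmod ?A)\<^sup>2 \<le> 2 * C * (cmod (?A - ?B))\<^sup>2 + 2 * (g \<xi> * (cmod ?B)\<^sup>2)" .
  qed
  also have "\<dots> = 2 * C * (LINT \<xi>|lborel. (cmod (U (Complex \<alpha> \<xi>) - U (Complex \<beta> \<xi>)))\<^sup>2)
      + 2 * (LINT \<xi>|lborel. g \<xi> * (cmod (U (Complex \<beta> \<xi>)))\<^sup>2)"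
    using int_diff int[OF assms(3)] by simp
  finally show ?thesis .
qed

lemma H2_lines_uniformly_small:
  fixes g :: "real \<Rightarrow> real \<Rightarrow> real"
  assumes U: "U \<in> H2 a"
    and g: "\<And>d. g d \<in> borel_measurable borel" "\<And>d \<xi>. 0 \<le> g d \<xi>" "\<And>d \<xi>. g d \<xi> \<le> C"
    and g_lim: "AE \<xi> in lborel. ((\<lambda>d. g d \<xi>) \<longlongrightarrow> 0) (at_right 0)"
    and "0 < \<epsilon>"
  shows "\<forall>\<^sub>F d in at_right 0. \<forall>\<alpha>>a. (LINT \<xi>|lborel. g d \<xi> * (cmod (U (Complex \<alpha> \<xi>)))\<^sup>2) \<le> \<epsilon>"
proof -
  have "0 \<le> C" using order_trans[OF g(2) g(3)] .
  define \<eta> where "\<eta> = \<epsilon> / (2 * C + 2)"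
  have "0 < \<eta>" using \<open>0 \<le> C\<close> \<open>0 < \<epsilon>\<close> by (simp add: \<eta>_def)
  have "2 * C + 2 \<noteq> 0" using \<open>0 \<le> C\<close> by linarith
  have "2 * C * \<eta> + 2 * \<eta> = (2 * C + 2) * \<eta>" by (simp add: algebra_simps)
  also have "\<dots> = \<epsilon>" using \<open>2 * C + 2 \<noteq> 0\<close> by (simp add: \<eta>_def)
  finally have \<epsilon>_eq: "2 * C * \<eta> + 2 * \<eta> = \<epsilon>" .
  obtain B where "finite B" "B \<subseteq> {a<..}"
    and net: "\<And>\<alpha>. a < \<alpha> \<Longrightarrow> \<exists>\<beta>\<in>B. (LINT \<xi>|lborel. (cmod (U (Complex \<alpha> \<xi>) - U (Complex \<beta> \<xi>)))\<^sup>2) \<le> \<eta>"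
    using H2_lines_finite_net[OF U \<open>0 < \<eta>\<close>] by blast
  have "\<forall>\<beta>\<in>B. \<forall>\<^sub>F d in at_right 0. (LINT \<xi>|lborel. g d \<xi> * (cmod (U (Complex \<beta> \<xi>)))\<^sup>2) < \<eta>"
    using \<open>B \<subseteq> {a<..}\<close> \<open>0 < \<eta>\<close>
    by (auto intro: order_tendstoD(2)[OF H2_weighted_line_tendsto_zero[OF U _ g g_lim]])
  with \<open>finite B\<close> have "\<forall>\<^sub>F d in at_right 0. \<forall>\<beta>\<in>B. (LINT \<xi>|lborel. g d \<xi> * (cmod (U (Complex \<beta> \<xi>)))\<^sup>2) < \<eta>"
    by (rule eventually_ball_finite)
  then show ?thesis
  proof eventually_elim
    case (elim d)
    show ?case
    proof (intro allI impI)
      fix \<alpha> assume "a < \<alpha>"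
      then obtain \<beta> where "\<beta> \<in> B" and close: "(LINT \<xi>|lborel. (cmod (U (Complex \<alpha> \<xi>) - U (Complex \<beta> \<xi>)))\<^sup>2) \<le> \<eta>"
        using net by blast
      then have "a < \<beta>" using \<open>B \<subseteq> {a<..}\<close> by auto
      have "(LINT \<xi>|lborel. g d \<xi> * (cmod (U (Complex \<alpha> \<xi>)))\<^sup>2)
          \<le> 2 * C * (LINT \<xi>|lborel. (cmod (U (Complex \<alpha> \<xi>) - U (Complex \<beta> \<xi>)))\<^sup>2)
            + 2 * (LINT \<xi>|lborel. g d \<xi> * (cmod (U (Complex \<beta> \<xi>)))\<^sup>2)"
        by (rule H2_weighted_line_le_near_line[OF U \<open>a < \<alpha>\<close> \<open>a < \<beta>\<close> g])
      also have "\<dots> \<le> 2 * C * \<eta> + 2 * \<eta>"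
        using close elim \<open>\<beta> \<in> B\<close> \<open>0 \<le> C\<close> by (intro add_mono mult_left_mono) auto
      finally show "(LINT \<xi>|lborel. g d \<xi> * (cmod (U (Complex \<alpha> \<xi>)))\<^sup>2) \<le> \<epsilon>"
        using \<epsilon>_eq by simp
    qed
  qed
qed

section \<open>The semigroup\<close>

lemma semigrp_multiplier_holomorphic:
  assumes "\<kappa> \<noteq> 0" "0 \<le> a"
  shows "(\<lambda>p. exp (- pKtilde \<kappa> p * of_real t)) holomorphic_on half_plane a"
proof -
  have "pKtilde \<kappa> holomorphic_on half_plane a"
    by (rule holomorphic_on_subset[OF pKtilde_holomorphic[OF assms(1)]]) (use assms(2) in \<open>auto simp: half_plane_def\<close>)
  then show ?thesis
    by (intro holomorphic_intros) (simp add: holomorphic_on_def)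
qed

lemma norm_semigrp_multiplier_le:
  assumes "0 \<le> t" "c \<le> Re (pKtilde \<kappa> p)"
  shows "cmod (exp (- pKtilde \<kappa> p * of_real t)) \<le> exp (- c * t)"
  using mult_right_mono[OF assms(2,1)] by simp

(* Bounds |exp(-w t) - exp(-w s)|^2 for |t - s| = d, with w = pKtilde kappa p; it depends on p only
   through Im p, which makes the estimate uniform over all vertical lines. *)
definition semigrp_increment_bound :: "real \<Rightarrow> real \<Rightarrow> real \<Rightarrow> real" where
  "semigrp_increment_bound \<kappa> d \<xi> = min 4 (pKtilde_bound \<kappa> \<xi> * d\<^sup>2)"

lemma semigrp_increment_sq_le:
  assumes "\<kappa> \<noteq> 0" "0 < Re p" "0 \<le> s" "0 \<le> t" "\<kappa> * Im p \<noteq> 1" "\<kappa> * Im p \<noteq> -1"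
  shows "(cmod (exp (- pKtilde \<kappa> p * of_real t) - exp (- pKtilde \<kappa> p * of_real s)))\<^sup>2
           \<le> semigrp_increment_bound \<kappa> \<bar>t - s\<bar> (Im p)"
proof -
  let ?w = "pKtilde \<kappa> p" and ?D = "exp (- pKtilde \<kappa> p * of_real t) - exp (- pKtilde \<kappa> p * of_real s)"
  have "cmod ?D \<le> min 2 (cmod ?w * \<bar>t - s\<bar>)"
    using Re_pKtilde_pos[OF assms(1,2)] assms(3,4) by (intro norm_exp_diff_le) auto
  then have D: "cmod ?D \<le> 2" "cmod ?D \<le> cmod ?w * \<bar>t - s\<bar>"
    by simp_all
  have "(cmod ?D)\<^sup>2 \<le> 2\<^sup>2"
    using D(1) by (intro power_mono) auto
  moreover have "(cmod ?D)\<^sup>2 \<le> (cmod ?w)\<^sup>2 * \<bar>t - s\<bar>\<^sup>2"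
    using power_mono[OF D(2) norm_ge_zero, of 2] by (simp add: power_mult_distrib)
  moreover have "(cmod ?w)\<^sup>2 * \<bar>t - s\<bar>\<^sup>2 \<le> pKtilde_bound \<kappa> (Im p) * \<bar>t - s\<bar>\<^sup>2"
    using norm_pKtilde_sq_le[OF assms(1,5,6)] by (rule mult_right_mono) simp
  ultimately show ?thesis
    by (simp add: semigrp_increment_bound_def)
qed

lemma semigrp_increment_bound_measurable: "semigrp_increment_bound \<kappa> d \<in> borel_measurable borel"
  unfolding semigrp_increment_bound_def[abs_def] pKtilde_bound_def by measurable

lemma semigrp_increment_bound_nonneg: "0 \<le> semigrp_increment_bound \<kappa> d \<xi>"
  using pKtilde_bound_nonneg[of \<kappa> \<xi>] by (simp add: semigrp_increment_bound_def)

lemma semigrp_increment_bound_le_4: "semigrp_increment_bound \<kappa> d \<xi> \<le> 4"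
  by (simp add: semigrp_increment_bound_def)

lemma semigrp_increment_bound_tendsto_0:
  "((\<lambda>d. semigrp_increment_bound \<kappa> d \<xi>) \<longlongrightarrow> 0) (at_right 0)"
proof -
  have "((\<lambda>d. min 4 (pKtilde_bound \<kappa> \<xi> * d\<^sup>2)) \<longlongrightarrow> min 4 (pKtilde_bound \<kappa> \<xi> * 0\<^sup>2)) (at_right 0)"
    by (intro tendsto_intros)
  then show ?thesis
    by (simp add: semigrp_increment_bound_def)
qed

lemma hardy_sq_semigrp_diff_le:
  assumes "0 < \<kappa>" "0 \<le> a" "0 \<le> t" "0 \<le> t0"
  shows "hardy_sq a (\<lambda>p. semigrp \<kappa> t U p - semigrp \<kappa> t0 U p)
    \<le> (SUP \<alpha>\<in>{a<..}. \<integral>\<^sup>+ \<xi>. ennreal (semigrp_increment_bound \<kappa> \<bar>t - t0\<bar> \<xi> * (cmod (U (Complex \<alpha> \<xi>)))\<^sup>2) \<partial>lborel)"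
proof -
  define m where "m p = exp (- pKtilde \<kappa> p * of_real t) - exp (- pKtilde \<kappa> p * of_real t0)" for p
  have "(\<lambda>p. semigrp \<kappa> t U p - semigrp \<kappa> t0 U p) = (\<lambda>p. m p * U p)"
    by (simp add: semigrp_eq m_def algebra_simps)
  moreover have "AE \<xi> in lborel. (cmod (m (Complex \<alpha> \<xi>)))\<^sup>2 \<le> semigrp_increment_bound \<kappa> \<bar>t - t0\<bar> \<xi>"
    if "a < \<alpha>" for \<alpha>
    using AE_lborel_singleton[of "1 / \<kappa>"] AE_lborel_singleton[of "- 1 / \<kappa>"]
  proof eventually_elim
    case (elim \<xi>)
    then have "\<kappa> * \<xi> \<noteq> 1" "\<kappa> * \<xi> \<noteq> -1"
      using \<open>0 < \<kappa>\<close> by (auto simp: field_simps)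
    then show ?case
      unfolding m_def using assms that semigrp_increment_sq_le[of \<kappa> "Complex \<alpha> \<xi>" t0 t]
      by simp
  qed
  ultimately show ?thesis
    by (simp add: hardy_sq_mult_le)
qed

lemma filterlim_abs_diff_at_right: "filterlim (\<lambda>t. \<bar>t - t0\<bar>) (at_right 0) (at (t0 :: real) within S)"
proof (rule tendsto_imp_filterlim_at_right)
  have "((\<lambda>t. \<bar>t - t0\<bar>) \<longlongrightarrow> \<bar>t0 - t0\<bar>) (at t0 within S)"
    by (intro tendsto_intros)
  then show "((\<lambda>t. \<bar>t - t0\<bar>) \<longlongrightarrow> 0) (at t0 within S)"
    by simp
  show "\<forall>\<^sub>F t in at t0 within S. 0 < \<bar>t - t0\<bar>"
    by (simp add: eventually_at_filter)
qed

lemma semigrp_continuous: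
  assumes "0 < \<kappa>" "0 \<le> a" and U: "U \<in> H2 a" and "0 \<le> t0"
  shows "((\<lambda>t. H2_norm a (\<lambda>p. semigrp \<kappa> t U p - semigrp \<kappa> t0 U p)) \<longlongrightarrow> 0) (at t0 within {0..})"
proof (rule tendstoI)
  fix e :: real assume "0 < e"
  define g where "g = semigrp_increment_bound \<kappa>"
  note g = semigrp_increment_bound_measurable[of \<kappa>, folded g_def]
    semigrp_increment_bound_nonneg[of \<kappa>, folded g_def] semigrp_increment_bound_le_4[of \<kappa>, folded g_def]
  have "\<forall>\<^sub>F d in at_right 0. \<forall>\<alpha>>a. (LINT \<xi>|lborel. g d \<xi> * (cmod (U (Complex \<alpha> \<xi>)))\<^sup>2) \<le> (e / 2)\<^sup>2"
    using \<open>0 < e\<close> semigrp_increment_bound_tendsto_0[of \<kappa>, folded g_def]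
    by (intro H2_lines_uniformly_small[OF U g]) simp_all
  then have "\<forall>\<^sub>F t in at t0 within {0..}.
      \<forall>\<alpha>>a. (LINT \<xi>|lborel. g \<bar>t - t0\<bar> \<xi> * (cmod (U (Complex \<alpha> \<xi>)))\<^sup>2) \<le> (e / 2)\<^sup>2"
    using filterlim_abs_diff_at_right by (rule eventually_compose_filterlim)
  moreover have "\<forall>\<^sub>F t in at t0 within {0..}. 0 \<le> t"
    by (simp add: eventually_at_filter)
  ultimately show "\<forall>\<^sub>F t in at t0 within {0..}.
      dist (H2_norm a (\<lambda>p. semigrp \<kappa> t U p - semigrp \<kappa> t0 U p)) 0 < e"
  proof eventually_elim
    case (elim t)
    have "hardy_sq a (\<lambda>p. semigrp \<kappa> t U p - semigrp \<kappa> t0 U p)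
        \<le> (SUP \<alpha>\<in>{a<..}. \<integral>\<^sup>+ \<xi>. ennreal (g \<bar>t - t0\<bar> \<xi> * (cmod (U (Complex \<alpha> \<xi>)))\<^sup>2) \<partial>lborel)"
      unfolding g_def using assms elim(2) by (intro hardy_sq_semigrp_diff_le)
    also have "\<dots> \<le> ennreal ((e / 2)\<^sup>2)"
      using elim(1) by (intro SUP_weighted_lines_le[OF U g]) auto
    finally have "H2_norm a (\<lambda>p. semigrp \<kappa> t U p - semigrp \<kappa> t0 U p) \<le> sqrt ((e / 2)\<^sup>2)"
      by (rule H2_norm_le_sqrt) simp
    then show ?case
      using \<open>0 < e\<close> by (simp add: H2_norm_def)
  qed
qed

theorem lemma5p5:
  fixes \<kappa> a :: real and U :: "complex \<Rightarrow> complex"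
  assumes "\<kappa> > 0" and "a \<ge> 0" and "U \<in> H2 a"
  shows "(\<forall>t\<ge>0. semigrp \<kappa> t U \<in> H2 a)
     \<and> (\<forall>t0\<ge>0. ((\<lambda>t. H2_norm a (\<lambda>p. semigrp \<kappa> t U p - semigrp \<kappa> t0 U p))
                      \<longlongrightarrow> 0) (at t0 within {0..}))
     \<and> (\<forall>t\<ge>0. H2_norm a (semigrp \<kappa> t U) \<le> H2_norm a U)
     \<and> (a > 0 \<longrightarrow> (\<exists>c>0. \<forall>V\<in>H2 a. \<forall>t\<ge>0.
            H2_norm a (semigrp \<kappa> t V) \<le> exp (- c * t) * H2_norm a V))"
proof -
  have \<kappa>: "\<kappa> \<noteq> 0" using assms(1) by simp
  note holo = semigrp_multiplier_holomorphic[OF \<kappa> assms(2)]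
  have Re_nonneg: "0 \<le> Re (pKtilde \<kappa> p)" if "a < Re p" for p
    using Re_pKtilde_pos[OF \<kappa>, of p] that assms(2) by simp
  have decay: "H2_norm a (semigrp \<kappa> t V) \<le> exp (- c * t) * H2_norm a V"
    if c: "\<And>p. a < Re p \<Longrightarrow> c \<le> Re (pKtilde \<kappa> p)" and "V \<in> H2 a" "0 \<le> t" for c V t
    unfolding semigrp_eq
    by (rule H2_mult(2)[OF \<open>V \<in> H2 a\<close> holo])
      (use norm_semigrp_multiplier_le[OF \<open>0 \<le> t\<close> c] in \<open>auto simp: half_plane_def\<close>)
  show ?thesis
  proof (intro conjI allI impI)
    fix t :: real assume "0 \<le> t"
    show "semigrp \<kappa> t U \<in> H2 a"
      unfolding semigrp_eq
      by (rule H2_mult(1)[OF assms(3) holo, where b = 1])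
        (use norm_semigrp_multiplier_le[OF \<open>0 \<le> t\<close> Re_nonneg] in \<open>auto simp: half_plane_def\<close>)
    show "H2_norm a (semigrp \<kappa> t U) \<le> H2_norm a U"
      using decay[OF Re_nonneg assms(3) \<open>0 \<le> t\<close>] by simp
  next
    fix t0 :: real assume "0 \<le> t0"
    then show "((\<lambda>t. H2_norm a (\<lambda>p. semigrp \<kappa> t U p - semigrp \<kappa> t0 U p)) \<longlongrightarrow> 0) (at t0 within {0..})"
      by (rule semigrp_continuous[OF assms(1-3)])
  next
    assume "0 < a"
    then obtain c where "0 < c" "\<And>p. a < Re p \<Longrightarrow> c \<le> Re (pKtilde \<kappa> p)"
      using Re_pKtilde_uniform_lower[OF \<kappa>] by blast
    then show "\<exists>c>0. \<forall>V\<in>H2 a. \<forall>t\<ge>0. H2_norm a (semigrp \<kappa> t V) \<le> exp (- c * t) * H2_norm a V"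
      using decay by blast
  qed
qed

end
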